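(* Consider the exponential case $\ell(y)=y$ (i.e. $k=1$), with $0<c<p$, horizon $T\ge1$, $b_1>0$, $a_1>1$, and set of feasible wholesale prices $W=(0,\infty)$. Then: (a) There exists a unique SMPS $(w^*_t(a),\tilde z^*_t(a,w))_{1\le t\le T}$. Moreover, writing $\tilde z^*_t(a):=\tilde z^*_t(a,w^*_t(a))$, for all $t\le T$ and $a\in A$, $w\in W$: $$w^*_t(a)=\big(p+f^R_{t+1}(a+1)-f^R_{t+1}(a)\big)\left[1-\frac1a+\frac{c}{a\,w^*_t(a)}-\frac{f^M_{t+1}(a+1)-f^M_{t+1}(a)}{a\big(p+f^R_{t+1}(a+1)-f^R_{t+1}(a)\big)}\right]^{a},$$ $$\tilde z^*_t(a,w)=\max\left(\left(\frac{p+f^R_{t+1}(a+1)-f^R_{t+1}(a)}{w}\right)^{1/a}-1,\ 0\right),\qquad \tilde z^*_t(a)=\left(\frac{p+f^R_{t+1}(a+1)-f^R_{t+1}(a)}{w^*_t(a)}\right)^{1/a}-1,$$ and the standardized value functions are $$f^R_t(a)=\sum_{i=0}^{T-t}\Big[p-w^*_{t+i}(a+i)\big(1+(a+i)\tilde z^*_{t+i}(a+i)\big)\Big],\qquad f^M_t(a)=\sum_{i=0}^{T-t}\Big[w^*_{t+i}(a+i)-c\big(1+(a+i)\tilde z^*_{t+i}(a+i)\big)\Big],$$ with $f^R_{T+1}=f^M_{T+1}=0$. (b) There exists a unique MPE $(w^*_t(a,b),q^*_t(a,b,w))_{1\le t\le T}$ of the game, given by $w^*_t(a,b)=w^*_t(a)$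 and $q^*_t(a,b,w)=b\,\tilde z^*_t(a,w)$.
   Context: Setting. A manufacturer M and a retailer R interact over periods $t=1,\dots,T$. Retail price $p$ and unit cost $c$ satisfy $0<c<p$. Wholesale prices lie in $W=(0,\infty)$; order quantities in $Q=[0,\infty)$. An unknown $\Theta>0$ has Gamma prior density $\phi(\theta\mid a,b)=b^{a}\theta^{a-1}e^{-b\theta}/\Gamma(a)$; given $\Theta=\theta$ demands are i.i.d. with $P(D_t\le y\mid\theta)=1-e^{-\theta y}$. The predictive distribution function is $G(y\mid a,b)=1-\big(b/(b+y)\big)^{a}$, $y\ge0$, $\bar G=1-G$, and $E[\,\cdot\mid a,b]$ is expectation under $D\sim G(\cdot\mid a,b)$. Let $A=\{a_1+n:n=0,1,2,\dots\}$, $B=[b_1,\infty)$. Each period the manufacturer chooses $w$, the retailer observes it and orders $q$, sales $\min(D,q)$ are publicly observed (unmet demand lost, unobserved), and the public belief state moves to $\Phi(a,b,q,d)=(a+\mathbf 1\{\min(d,q)<q\},\ b+\min(d,q))$. Per-period payoffs: $\Pi^R(w,q\mid a,b)=p\,E[\min(D,q)\mid a,b]-wq$, $\Pi^M(w,q)=(w-c)q$. MPE: Markov strategies are Borel maps $w_t:A\times B\to W$, $q_t:A\times B\times W\to Q$. A pair $(w^*_t,q^*_t)_{t\le T}$ is an MPE if there exist $V^R_t,V^M_t:A\times B\to\mathbb R$, $\hat V^R_t:A\times B\times W\to\mathbb R$ ($t\le T+1$) with, for all $a,b,w$: (i) all equal $0$ at $t=T+1$; (ii) $\hat V^R_t(a,b,w)=\max_{q\in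 Q}\{\Pi^R(w,q\mid a,b)+E[V^R_{t+1}(\Phi(a,b,q,D))\mid a,b]\}$, attained at $q^*_t(a,b,w)$; (iii) $V^M_t(a,b)=\max_{w\in W}\{\Pi^M(w,q^*_t(a,b,w))+E[V^M_{t+1}(\Phi(a,b,q^*_t(a,b,w),D))\mid a,b]\}$, attained at $w^*_t(a,b)$; (iv) $V^R_t(a,b)=\hat V^R_t(a,b,w^*_t(a,b))$. SMPS: with $\tilde Q=[0,\infty)$, standardized payoffs $\tilde\Pi^R(w,\tilde z\mid a)=(a-1)(p\,E[\min(D,\tilde z)\mid a,1]-w\tilde z)$, $\tilde\Pi^M(w,\tilde z\mid a)=(a-1)(w-c)\tilde z$, and for $f:A\to\mathbb R$ the operator $\mathcal E[f,\tilde z\mid a]=G(\tilde z\mid a-1,1)f(a+1)+\bar G(\tilde z\mid a-1,1)f(a)$. Standardized Markov strategies are maps $w_t:A\to W$, $\tilde z_t:A\times W\to\tilde Q$. A pair $(w^*_t,\tilde z^*_t)_{t\le T}$ is an SMPS if there exist $f^R_t,f^M_t:A\to\mathbb R$, $\hat f^R_t:A\times W\to\mathbb R$ ($t\le T+1$) with, for all $a,w$: (i) all equal $0$ at $t=T+1$; (ii) $\hat f^R_t(a,w)=\max_{\tilde z\in\tilde Q}\{\tilde\Pi^R(w,\tilde z\mid a)+\mathcal E[f^R_{t+1},\tilde z\mid a]\}$, attained at $\tilde z^*_t(a,w)$; (iii) $f^M_t(a)=\max_{w\in W}\{\tilde\Pi^M(w,\tilde z^*_t(a,w)\mid a)+\mathcal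 E[f^M_{t+1},\tilde z^*_t(a,w)\mid a]\}$, attained at $w^*_t(a)$; (iv) $f^R_t(a)=\hat f^R_t(a,w^*_t(a))$. *)

theory Defs
  imports "HOL-Analysis.Analysis"
begin

definition Aset :: "real \<Rightarrow> real set" where
  "Aset a1 = {a1 + real n | n. True}"

definition Bset :: "real \<Rightarrow> real set" where
  "Bset b1 = {b1..}"

definition Wset :: "real set" where
  "Wset = {0<..}"

definition Qset :: "real set" where
  "Qset = {0..}"

definition Gpred :: "real \<Rightarrow> real \<Rightarrow> real \<Rightarrow> real" where
  "Gpred a b y = 1 - (b / (b + y)) powr a"

text \<open>The law of D under G(. | a,b): the Borel measure on the reals whose
  distribution function is G(. | a,b) on [0,inf) and 0 on (-inf,0].\<close>
definition pred :: "real \<Rightarrow> real \<Rightarrow> real measure" where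
  "pred a b = interval_measure (\<lambda>y. if y \<le> 0 then 0 else Gpred a b y)"

definition Epred :: "real \<Rightarrow> real \<Rightarrow> (real \<Rightarrow> real) \<Rightarrow> real" where
  "Epred a b h = (\<integral>y. h y \<partial>pred a b)"

definition Phi :: "real \<Rightarrow> real \<Rightarrow> real \<Rightarrow> real \<Rightarrow> real \<times> real" where
  "Phi a b q d = (a + (if min d q < q then 1 else 0), b + min d q)"

definition PiR :: "real \<Rightarrow> real \<Rightarrow> real \<Rightarrow> real \<Rightarrow> real \<Rightarrow> real" where
  "PiR p w q a b = p * Epred a b (\<lambda>y. min y q) - w * q"

definition PiM :: "real \<Rightarrow> real \<Rightarrow> real \<Rightarrow> real" where
  "PiM c w q = (w - c) * q"

definition sPiR :: "real \<Rightarrow> real \<Rightarrow> real \<Rightarrow> real \<Rightarrow> real" where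
  "sPiR p w z a = (a - 1) * (p * Epred a 1 (\<lambda>y. min y z) - w * z)"

definition sPiM :: "real \<Rightarrow> real \<Rightarrow> real \<Rightarrow> real \<Rightarrow> real" where
  "sPiM c w z a = (a - 1) * (w - c) * z"

definition calE :: "(real \<Rightarrow> real) \<Rightarrow> real \<Rightarrow> real \<Rightarrow> real" where
  "calE f z a = Gpred (a - 1) 1 z * f (a + 1) + (1 - Gpred (a - 1) 1 z) * f a"

text \<open>w : period -> a -> wholesale price; z : period -> a -> w -> standardized order;
  fR, fM, fRh : the value functions of conditions (i)-(iv). Periods are 1..T.\<close>
definition smps_values ::
  "real \<Rightarrow> real \<Rightarrow> nat \<Rightarrow> real \<Rightarrow>
   (nat \<Rightarrow> real \<Rightarrow> real) \<Rightarrow> (nat \<Rightarrow> real \<Rightarrow> real \<Rightarrow> real) \<Rightarrow>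
   (nat \<Rightarrow> real \<Rightarrow> real) \<Rightarrow> (nat \<Rightarrow> real \<Rightarrow> real) \<Rightarrow> (nat \<Rightarrow> real \<Rightarrow> real \<Rightarrow> real) \<Rightarrow> bool"
where
  "smps_values p c T a1 w z fR fM fRh \<longleftrightarrow>
     (\<forall>a\<in>Aset a1. fR (Suc T) a = 0 \<and> fM (Suc T) a = 0 \<and> (\<forall>v\<in>Wset. fRh (Suc T) a v = 0)) \<and>
     (\<forall>t\<in>{1..T}. \<forall>a\<in>Aset a1. \<forall>v\<in>Wset.
        z t a v \<in> Qset \<and>
        (\<forall>z'\<in>Qset. sPiR p v z' a + calE (fR (Suc t)) z' a
                    \<le> sPiR p v (z t a v) a + calE (fR (Suc t)) (z t a v) a) \<and>
        fRh t a v = sPiR p v (z t a v) a + calE (fR (Suc t)) (z t a v) a) \<and>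
     (\<forall>t\<in>{1..T}. \<forall>a\<in>Aset a1.
        w t a \<in> Wset \<and>
        (\<forall>v\<in>Wset. sPiM c v (z t a v) a + calE (fM (Suc t)) (z t a v) a
                   \<le> sPiM c (w t a) (z t a (w t a)) a + calE (fM (Suc t)) (z t a (w t a)) a) \<and>
        fM t a = sPiM c (w t a) (z t a (w t a)) a + calE (fM (Suc t)) (z t a (w t a)) a) \<and>
     (\<forall>t\<in>{1..T}. \<forall>a\<in>Aset a1. fR t a = fRh t a (w t a))"

definition is_smps ::
  "real \<Rightarrow> real \<Rightarrow> nat \<Rightarrow> real \<Rightarrow>
   (nat \<Rightarrow> real \<Rightarrow> real) \<Rightarrow> (nat \<Rightarrow> real \<Rightarrow> real \<Rightarrow> real) \<Rightarrow> bool"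
where
  "is_smps p c T a1 w z \<longleftrightarrow> (\<exists>fR fM fRh. smps_values p c T a1 w z fR fM fRh)"

definition borel_markov ::
  "real \<Rightarrow> real \<Rightarrow> nat \<Rightarrow> (nat \<Rightarrow> real \<Rightarrow> real \<Rightarrow> real) \<Rightarrow>
   (nat \<Rightarrow> real \<Rightarrow> real \<Rightarrow> real \<Rightarrow> real) \<Rightarrow> bool"
where
  "borel_markov a1 b1 T w q \<longleftrightarrow>
     (\<forall>t\<in>{1..T}.
        (\<forall>a\<in>Aset a1. \<forall>b\<in>Bset b1. w t a b \<in> Wset \<and> (\<forall>v\<in>Wset. q t a b v \<in> Qset)) \<and>
        (\<lambda>x. w t (fst x) (snd x)) \<in> borel_measurable (restrict_space borel (Aset a1 \<times> Bset b1)) \<and>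
        (\<lambda>x. q t (fst x) (fst (snd x)) (snd (snd x)))
           \<in> borel_measurable (restrict_space borel (Aset a1 \<times> Bset b1 \<times> Wset)))"

text \<open>Conditions (i)-(iv); the expectations occurring in them are required to
  exist (integrability of the integrands).\<close>
definition mpe_values ::
  "real \<Rightarrow> real \<Rightarrow> nat \<Rightarrow> real \<Rightarrow> real \<Rightarrow>
   (nat \<Rightarrow> real \<Rightarrow> real \<Rightarrow> real) \<Rightarrow> (nat \<Rightarrow> real \<Rightarrow> real \<Rightarrow> real \<Rightarrow> real) \<Rightarrow>
   (nat \<Rightarrow> real \<Rightarrow> real \<Rightarrow> real) \<Rightarrow> (nat \<Rightarrow> real \<Rightarrow> real \<Rightarrow> real) \<Rightarrow>
   (nat \<Rightarrow> real \<Rightarrow> real \<Rightarrow> real \<Rightarrow> real) \<Rightarrow> bool"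
where
  "mpe_values p c T a1 b1 w q VR VM VRh \<longleftrightarrow>
     (\<forall>a\<in>Aset a1. \<forall>b\<in>Bset b1.
        VR (Suc T) a b = 0 \<and> VM (Suc T) a b = 0 \<and> (\<forall>v\<in>Wset. VRh (Suc T) a b v = 0)) \<and>
     (\<forall>t\<in>{1..T}. \<forall>a\<in>Aset a1. \<forall>b\<in>Bset b1. \<forall>v\<in>Wset.
        (\<forall>q'\<in>Qset. integrable (pred a b) (\<lambda>d. case_prod (VR (Suc t)) (Phi a b q' d))) \<and>
        (\<forall>q'\<in>Qset. PiR p v q' a b + Epred a b (\<lambda>d. case_prod (VR (Suc t)) (Phi a b q' d))
            \<le> PiR p v (q t a b v) a b
               + Epred a b (\<lambda>d. case_prod (VR (Suc t)) (Phi a b (q t a b v) d))) \<and>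
        VRh t a b v = PiR p v (q t a b v) a b
               + Epred a b (\<lambda>d. case_prod (VR (Suc t)) (Phi a b (q t a b v) d))) \<and>
     (\<forall>t\<in>{1..T}. \<forall>a\<in>Aset a1. \<forall>b\<in>Bset b1.
        (\<forall>v\<in>Wset. integrable (pred a b) (\<lambda>d. case_prod (VM (Suc t)) (Phi a b (q t a b v) d))) \<and>
        (\<forall>v\<in>Wset. PiM c v (q t a b v)
                     + Epred a b (\<lambda>d. case_prod (VM (Suc t)) (Phi a b (q t a b v) d))
            \<le> PiM c (w t a b) (q t a b (w t a b))
               + Epred a b (\<lambda>d. case_prod (VM (Suc t)) (Phi a b (q t a b (w t a b)) d))) \<and>
        VM t a b = PiM c (w t a b) (q t a b (w t a b))
               + Epred a b (\<lambda>d. case_prod (VM (Suc t)) (Phi a b (q t a b (w t a b)) d))) \<and>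
     (\<forall>t\<in>{1..T}. \<forall>a\<in>Aset a1. \<forall>b\<in>Bset b1. VR t a b = VRh t a b (w t a b))"

definition is_mpe ::
  "real \<Rightarrow> real \<Rightarrow> nat \<Rightarrow> real \<Rightarrow> real \<Rightarrow>
   (nat \<Rightarrow> real \<Rightarrow> real \<Rightarrow> real) \<Rightarrow> (nat \<Rightarrow> real \<Rightarrow> real \<Rightarrow> real \<Rightarrow> real) \<Rightarrow> bool"
where
  "is_mpe p c T a1 b1 w q \<longleftrightarrow>
     borel_markov a1 b1 T w q \<and> (\<exists>VR VM VRh. mpe_values p c T a1 b1 w q VR VM VRh)"

end

theory Submission
  imports Defs "HOL-Probability.Distribution_Functions" "HOL-Real_Asymp.Real_Asymp"
begin

text \<open>The predictive law of demand is a Lomax distribution. Its truncated mean, together with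
  the conjugate update of the Gamma prior, makes every payoff of the game scale linearly in the
  belief b: values of the form V(a, b) = b f(a) / (a - 1) turn the game into its standardized
  version with order z = q / b. In a standardized stage with continuation margins
  K = p + f^R(a + 1) - f^R(a) > 0 and L = K + f^M(a + 1) - f^M(a) > c, the retailer's gain is
  strictly concave in z with unique maximizer max((K / v)^(1/a) - 1, 0), and the manufacturer's
  gain, written in x = (v / K)^(1/a), increases up to the unique root in (0, 1) of
  x^a (L - a K + a K x) = c and decreases afterwards. Backward induction, which preserves
  K > 0 and L > c, gives existence and uniqueness of the SMPS, and the same induction after
  rescaling gives those of the MPE.\<close>

section \<open>The predictive distribution\<close>

definition pred_cdf :: "real \<Rightarrow> real \<Rightarrow> real \<Rightarrow> real" where
  "pred_cdf a b y = (if y \<le> 0 then 0 else Gpred a b y)"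

definition pred_pdf :: "real \<Rightarrow> real \<Rightarrow> real \<Rightarrow> real" where
  "pred_pdf a b y = (if 0 \<le> y then a * b powr a * (b + y) powr (- a - 1) else 0)"

lemma borel_measurable_pred_pdf [measurable]: "pred_pdf a b \<in> borel_measurable borel"
  unfolding pred_pdf_def[abs_def] by measurable

lemma pred_eq_interval_measure: "pred a b = interval_measure (pred_cdf a b)"
  by (simp add: pred_def pred_cdf_def[abs_def])

lemma sets_pred [simp, measurable_cong]: "sets (pred a b) = sets borel"
  by (simp add: pred_def)

lemma space_pred [simp]: "space (pred a b) = UNIV"
  by (simp add: pred_def)

lemma powr_ratio_eq: "0 < b \<Longrightarrow> 0 \<le> y \<Longrightarrow> b powr r * (b + y) powr (- r) = (b / (b + y)) powr r"
  for b y r :: real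
  using powr_divide[of b "b + y" r] by (simp add: powr_minus divide_inverse)

lemma pred_cdf_eq: "0 < b \<Longrightarrow> pred_cdf a b y = 1 - (b / (b + max y 0)) powr a"
  by (auto simp: pred_cdf_def Gpred_def max_def)

lemma continuous_on_pred_cdf:
  assumes "0 < b"
  shows "continuous_on UNIV (pred_cdf a b)"
proof -
  have "continuous_on UNIV (\<lambda>y. 1 - (b / (b + max y 0)) powr a)"
    using assms by (intro continuous_intros) (auto simp: add_pos_nonneg)
  then show ?thesis using assms by (simp add: pred_cdf_eq)
qed

lemma mono_pred_cdf:
  assumes "0 < b" "0 \<le> a" "x \<le> y"
  shows "pred_cdf a b x \<le> pred_cdf a b y"
proof -
  have "(b / (b + max y 0)) powr a \<le> (b / (b + max x 0)) powr a"
    using assms by (intro powr_mono2) (auto intro!: divide_left_mono simp: add_pos_nonneg)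
  then show ?thesis using assms by (simp add: pred_cdf_eq)
qed

lemma pred_cdf_nonneg: "0 < b \<Longrightarrow> 0 \<le> a \<Longrightarrow> 0 \<le> pred_cdf a b y"
  using mono_pred_cdf[of b a 0 "max y 0"] by (auto simp: pred_cdf_def max_def split: if_splits)

lemma pred_cdf_at_bot: "(pred_cdf a b \<longlongrightarrow> 0) at_bot"
  by (rule tendsto_eventually) (auto simp: eventually_at_bot_linorder pred_cdf_def intro!: exI[of _ 0])

lemma pred_cdf_at_top:
  assumes "0 < a" "0 < b"
  shows "(pred_cdf a b \<longlongrightarrow> 1) at_top"
proof (rule Lim_transform_eventually)
  show "((\<lambda>y. 1 - (b / (b + y)) powr a) \<longlongrightarrow> 1) at_top"
    using assms by real_asymp
  show "\<forall>\<^sub>F y in at_top. 1 - (b / (b + y)) powr a = pred_cdf a b y"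
    by (auto simp: eventually_at_top_linorder pred_cdf_def Gpred_def intro!: exI[of _ 1])
qed

lemma real_distribution_pred: "0 < a \<Longrightarrow> 0 < b \<Longrightarrow> real_distribution (pred a b)"
  unfolding pred_eq_interval_measure
  by (intro real_distribution_interval_measure mono_pred_cdf pred_cdf_at_bot pred_cdf_at_top
        continuous_on_imp_continuous_within[OF continuous_on_pred_cdf]) auto

lemma prob_space_pred: "0 < a \<Longrightarrow> 0 < b \<Longrightarrow> prob_space (pred a b)"
  using real_distribution_pred by (simp add: real_distribution_def)

lemma cdf_pred: "0 < a \<Longrightarrow> 0 < b \<Longrightarrow> cdf (pred a b) = pred_cdf a b"
  unfolding pred_eq_interval_measure cdf_def
  by (intro ext measure_interval_measure_Iic mono_pred_cdf pred_cdf_at_bot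
        continuous_on_imp_continuous_within[OF continuous_on_pred_cdf]) auto

lemma emeasure_pred_pdf_atMost:
  assumes "0 < a" "0 < b"
  shows "emeasure (density lborel (pred_pdf a b)) {..x} = pred_cdf a b x"
proof (cases "0 \<le> x")
  case True
  have "emeasure (density lborel (pred_pdf a b)) {..x}
      = (\<integral>\<^sup>+ y. ennreal (a * b powr a * (b + y) powr (- a - 1)) * indicator {0..x} y \<partial>lborel)"
    by (auto simp: emeasure_density pred_pdf_def intro!: nn_integral_cong split: split_indicator)
  also have "\<dots> = ennreal (- (b powr a * (b + x) powr (- a)) - - (b powr a * (b + 0) powr (- a)))"
    using assms True by (intro nn_integral_FTC_Icc) (auto intro!: derivative_eq_intros simp: algebra_simps)
  also have "\<dots> = pred_cdf a b x"
    using assms True powr_ratio_eq[of b x a] powr_ratio_eq[of b 0 a] by (simp add: pred_cdf_eq)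
  finally show ?thesis .
next
  case False
  have "emeasure (density lborel (pred_pdf a b)) {..x}
      = (\<integral>\<^sup>+ y. ennreal (pred_pdf a b y) * indicator {..x} y \<partial>lborel)"
    by (rule emeasure_density) auto
  also have "\<dots> = (\<integral>\<^sup>+ y. 0 \<partial>(lborel :: real measure))"
    using False by (intro nn_integral_cong) (auto simp: pred_pdf_def split: split_indicator)
  finally show ?thesis using False by (simp add: pred_cdf_def)
qed

lemma emeasure_pred_pdf_UNIV:
  assumes "0 < a" "0 < b"
  shows "emeasure (density lborel (pred_pdf a b)) UNIV = 1"
proof -
  have "emeasure (density lborel (pred_pdf a b)) UNIV
      = (\<integral>\<^sup>+ y. ennreal (a * b powr a * (b + y) powr (- a - 1)) * indicator {0..} y \<partial>lborel)"
    by (auto simp: emeasure_density pred_pdf_def intro!: nn_integral_cong split: split_indicator)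
  also have "\<dots> = ennreal (0 - (- (b powr a * (b + 0) powr (- a))))"
  proof (rule nn_integral_FTC_atLeast)
    show "((\<lambda>y. - (b powr a * (b + y) powr (- a))) \<longlongrightarrow> 0) at_top"
      using assms by real_asymp
  qed (use assms in \<open>auto intro!: derivative_eq_intros simp: algebra_simps\<close>)
  finally show ?thesis
    using assms by (simp add: powr_minus)
qed

lemma pred_eq_density:
  assumes "0 < a" "0 < b"
  shows "pred a b = density lborel (pred_pdf a b)"
proof (rule cdf_unique')
  show "finite_borel_measure (pred a b)"
    using real_distribution_pred[OF assms] by (simp add: real_distribution.finite_borel_measure_M)
  show "finite_borel_measure (density lborel (pred_pdf a b))"
    by (intro finite_borel_measure.intro finite_measureI finite_borel_measure_axioms.intro)
       (auto simp: emeasure_pred_pdf_UNIV[OF assms])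
  show "cdf (pred a b) = cdf (density lborel (pred_pdf a b))"
    unfolding cdf_pred[OF assms] using emeasure_pred_pdf_atMost[OF assms] pred_cdf_nonneg[of b a] assms
    by (auto simp: cdf_def measure_def)
qed

lemma AE_pred_nonneg:
  assumes "0 < a" "0 < b"
  shows "AE y in pred a b. 0 \<le> y"
  unfolding pred_eq_density[OF assms] by (subst AE_density) (auto simp: pred_pdf_def)

lemma AE_pred_neq:
  assumes "0 < a" "0 < b"
  shows "AE y in pred a b. y \<noteq> q"
  unfolding pred_eq_density[OF assms]
  by (subst AE_density) (auto intro: AE_mp[OF AE_lborel_singleton[of q]])

lemma measure_pred_greaterThan:
  assumes "0 < a" "0 < b" "0 \<le> q"
  shows "measure (pred a b) {q<..} = (b / (b + q)) powr a"
proof -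
  interpret prob_space "pred a b" by (rule prob_space_pred[OF assms(1,2)])
  have "measure (pred a b) {q<..} = 1 - measure (pred a b) {..q}"
    using prob_compl[of "{..q}"] by (simp add: Compl_eq_Diff_UNIV[symmetric] Compl_atMost)
  then show ?thesis
    using fun_cong[OF cdf_pred[OF assms(1,2)], of q] assms by (simp add: cdf_def pred_cdf_eq)
qed

lemma measure_pred_atLeast:
  assumes "0 < a" "0 < b" "0 \<le> q"
  shows "measure (pred a b) {q..} = (b / (b + q)) powr a"
proof -
  have "measure (pred a b) {q..} = measure (pred a b) {q<..}"
    using AE_pred_neq[OF assms(1,2), of q] by (intro measure_eq_AE) (auto elim!: AE_mp)
  then show ?thesis using measure_pred_greaterThan[OF assms] by simp
qed

lemma Gpred_scale: "0 < b \<Longrightarrow> Gpred a b q = Gpred a 1 (q / b)"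
  by (simp add: Gpred_def add_divide_distrib[symmetric] field_simps)

lemma Gpred_standard: "-1 < z \<Longrightarrow> Gpred (a - 1) 1 z = 1 - (1 + z) powr (1 - a)"
  by (simp add: Gpred_def powr_divide powr_minus_divide[symmetric] add.commute)

lemma survival_shift:
  assumes "0 < b" "0 \<le> q"
  shows "(b + q) * (1 - Gpred a b q) = b * (1 - Gpred (a - 1) b q)"
proof -
  have "(b / (b + q)) powr a = b / (b + q) * (b / (b + q)) powr (a - 1)"
    using powr_mult_base[of "b / (b + q)" "a - 1"] assms by simp
  then show ?thesis using assms by (simp add: Gpred_def)
qed

lemma antiderivative_truncated_mean:
  fixes a b y :: real
  assumes "0 < b" "- b < y" "a \<noteq> 1"
  shows "((\<lambda>y. - (y * (b powr a * (b + y) powr (- a))) - b powr a / (a - 1) * (b + y) powr (1 - a))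
          has_real_derivative a * b powr a * (b + y) powr (- a - 1) * y) (at y)"
proof -
  have "0 < b + y" using assms by simp
  then have "((\<lambda>y. - (y * (b powr a * (b + y) powr (- a))) - b powr a / (a - 1) * (b + y) powr (1 - a))
      has_real_derivative - (y * (b powr a * (- a * (b + y) powr (- a - 1))) + b powr a * (b + y) powr (- a))
        - b powr a / (a - 1) * ((1 - a) * (b + y) powr (1 - a - 1))) (at y)"
    using assms(3) by (auto intro!: derivative_eq_intros)
  moreover have "- (y * (b powr a * (- a * (b + y) powr (- a - 1))) + b powr a * (b + y) powr (- a))
      - b powr a / (a - 1) * ((1 - a) * (b + y) powr (1 - a - 1)) = a * b powr a * (b + y) powr (- a - 1) * y"
    using assms(3) by (simp add: divide_simps) (simp add: algebra_simps)
  ultimately show ?thesis by (rule DERIV_cong)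
qed

lemma Epred_min:
  assumes "1 < a" "0 < b" "0 \<le> q"
  shows integrable_pred_min: "integrable (pred a b) (\<lambda>y. min y q)"
    and Epred_min_eq: "Epred a b (\<lambda>y. min y q) = b / (a - 1) * Gpred (a - 1) b q"
proof -
  have a0: "0 < a" using assms by simp
  interpret prob_space "pred a b" by (rule prob_space_pred[OF a0 assms(2)])
  have int_lower: "integrable (pred a b) (\<lambda>y. y * indicator {..q} y)"
    using AE_pred_nonneg[OF a0 assms(2)] assms
    by (intro integrable_const_bound[where B=q]) (auto elim!: AE_mp split: split_indicator)
  have int_upper: "integrable (pred a b) (\<lambda>y. q * indicator {q<..} y)"
    using assms by (intro integrable_const_bound[where B=q]) (auto split: split_indicator)
  have split_min: "(\<lambda>y. min y q) = (\<lambda>y. y * indicator {..q} y + q * indicator {q<..} y)"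
    by (auto simp: fun_eq_iff split: split_indicator)
  show "integrable (pred a b) (\<lambda>y. min y q)"
    unfolding split_min using int_lower int_upper by simp
  have "(\<integral>y. y * indicator {..q} y \<partial>pred a b)
      = (\<integral>y. (a * b powr a * (b + y) powr (- a - 1) * y) * indicator {0..q} y \<partial>lborel)"
    unfolding pred_eq_density[OF a0 assms(2)] using a0 assms(2)
    by (subst integral_density) (auto simp: pred_pdf_def intro!: Bochner_Integration.integral_cong split: split_indicator)
  also have "\<dots> = (- (q * (b powr a * (b + q) powr (- a))) - b powr a / (a - 1) * (b + q) powr (1 - a))
       - (- (0 * (b powr a * (b + 0) powr (- a))) - b powr a / (a - 1) * (b + 0) powr (1 - a))"
    using assms
    by (intro integral_FTC_Icc_real antiderivative_truncated_mean) (auto intro!: continuous_intros)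
  also have "\<dots> = b / (a - 1) * Gpred (a - 1) b q - q * (b / (b + q)) powr a"
  proof -
    have "b powr a = b * b powr (a - 1)"
      using assms by (simp add: powr_mult_base)
    then have "b powr a / (a - 1) * (b + q) powr (1 - a) = b / (a - 1) * (b / (b + q)) powr (a - 1)"
      "b powr a / (a - 1) * (b + 0) powr (1 - a) = b / (a - 1)"
      using powr_ratio_eq[of b q "a - 1"] powr_ratio_eq[of b 0 "a - 1"] assms by simp_all
    then show ?thesis
      using powr_ratio_eq[of b q a] assms by (simp add: Gpred_def algebra_simps)
  qed
  finally show "Epred a b (\<lambda>y. min y q) = b / (a - 1) * Gpred (a - 1) b q"
    unfolding Epred_def split_min using int_lower int_upper measure_pred_greaterThan[OF a0 assms(2,3)]
    by simp
qed

section \<open>The standardized payoffs\<close>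

lemma sPiR_eq: "1 < a \<Longrightarrow> 0 \<le> z \<Longrightarrow> sPiR p v z a = p * Gpred (a - 1) 1 z - (a - 1) * v * z"
  by (simp add: sPiR_def Epred_min_eq field_simps)

lemma PiR_eq_scaled_sPiR:
  assumes "1 < a" "0 < b" "0 \<le> q"
  shows "PiR p v q a b = b / (a - 1) * sPiR p v (q / b) a"
  using assms by (simp add: PiR_def sPiR_eq Epred_min_eq Gpred_scale[of b "a - 1" q] field_simps)

lemma PiM_eq_scaled_sPiM: "1 < a \<Longrightarrow> 0 < b \<Longrightarrow> PiM c v q = b / (a - 1) * sPiM c v (q / b) a"
  by (simp add: PiM_def sPiM_def field_simps)

definition unstandardize :: "(real \<Rightarrow> real) \<Rightarrow> real \<Rightarrow> real \<Rightarrow> real" where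
  "unstandardize f a b = b * f a / (a - 1)"

lemma Epred_unstandardize_Phi:
  assumes "1 < a" "0 < b" "0 \<le> q"
  shows integrable_unstandardize_Phi:
      "integrable (pred a b) (\<lambda>d. case_prod (unstandardize g) (Phi a b q d))"
    and Epred_unstandardize_Phi_eq:
      "Epred a b (\<lambda>d. case_prod (unstandardize g) (Phi a b q d)) = b / (a - 1) * calE g (q / b) a"
proof -
  have a0: "0 < a" using assms by simp
  interpret prob_space "pred a b" by (rule prob_space_pred[OF a0 assms(2)])
  have prob_UNIV: "prob UNIV = 1" using prob_space by simp
  have int_ind: "integrable (pred a b) (\<lambda>d. indicator {q..} d :: real)"
    by (intro integrable_const_bound[where B=1]) (auto split: split_indicator)
  have split_Phi: "(\<lambda>d. case_prod (unstandardize g) (Phi a b q d))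
      = (\<lambda>d. g (a + 1) / a * (b + min d q) + (g a / (a - 1) - g (a + 1) / a) * (b + q) * indicator {q..} d)"
    using assms
    by (auto simp: fun_eq_iff unstandardize_def Phi_def min_def split: split_indicator)
       (auto simp: field_simps)
  show "integrable (pred a b) (\<lambda>d. case_prod (unstandardize g) (Phi a b q d))"
    unfolding split_Phi using integrable_pred_min[OF assms] int_ind by simp
  define G where "G = Gpred (a - 1) b q"
  have "(b + q) * measure (pred a b) {q..} = b * (1 - G)"
    using survival_shift[OF assms(2,3), of a] measure_pred_atLeast[OF a0 assms(2,3)]
    by (simp add: G_def Gpred_def)
  then have "Epred a b (\<lambda>d. case_prod (unstandardize g) (Phi a b q d))
      = g (a + 1) / a * (b + b / (a - 1) * G) + (g a / (a - 1) - g (a + 1) / a) * (b * (1 - G))"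
    using integrable_pred_min[OF assms] int_ind Epred_min_eq[OF assms]
    by (simp add: split_Phi Epred_def G_def mult.assoc prob_UNIV)
  also have "\<dots> = b / (a - 1) * (G * g (a + 1) + (1 - G) * g a)"
    using assms by (simp add: divide_simps) (simp add: algebra_simps)
  finally show "Epred a b (\<lambda>d. case_prod (unstandardize g) (Phi a b q d)) = b / (a - 1) * calE g (q / b) a"
    using assms by (simp add: calE_def G_def Gpred_scale[of b "a - 1" q])
qed

section \<open>The retailer's stage problem\<close>

lemma strict_max_by_deriv_sign:
  fixes f f' :: "real \<Rightarrow> real"
  assumes deriv: "\<And>t. l \<le> t \<Longrightarrow> (f has_real_derivative f' t) (at t)"
    and incr: "\<And>t. l < t \<Longrightarrow> t < m \<Longrightarrow> 0 < f' t"
    and decr: "\<And>t. m < t \<Longrightarrow> f' t < 0"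
    and "l \<le> x" "l \<le> m" "x \<noteq> m"
  shows "f x < f m"
proof -
  have cont: "continuous_on {s..u} f" if "l \<le> s" for s u
    using DERIV_isCont[OF deriv] that by (intro continuous_at_imp_continuous_on) auto
  consider "x < m" | "m < x" using \<open>x \<noteq> m\<close> by linarith
  then show ?thesis
  proof cases
    case 1
    show ?thesis
    proof (rule DERIV_pos_imp_increasing_open[OF 1 _ cont[OF \<open>l \<le> x\<close>]])
      fix t assume "x < t" "t < m"
      then show "\<exists>D. (f has_real_derivative D) (at t) \<and> 0 < D"
        using deriv[of t] incr[of t] \<open>l \<le> x\<close> by auto
    qed
  next
    case 2
    show ?thesis
    proof (rule DERIV_neg_imp_decreasing_open[OF 2 _ cont[OF \<open>l \<le> m\<close>]])
      fix t assume "m < t" "t < x"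
      then show "\<exists>D. (f has_real_derivative D) (at t) \<and> D < 0"
        using deriv[of t] decr[of t] \<open>l \<le> m\<close> by auto
    qed
  qed
qed

definition gainR :: "real \<Rightarrow> real \<Rightarrow> real \<Rightarrow> real \<Rightarrow> real" where
  "gainR a K v z = K * (1 - (1 + z) powr (1 - a)) - (a - 1) * v * z"

definition best_order :: "real \<Rightarrow> real \<Rightarrow> real \<Rightarrow> real" where
  "best_order a K v = max ((K / v) powr (1 / a) - 1) 0"

lemma best_order_nonneg: "0 \<le> best_order a K v"
  by (simp add: best_order_def)

lemma sPiR_calE_eq_gainR:
  "1 < a \<Longrightarrow> 0 \<le> z \<Longrightarrow> sPiR p v z a + calE f z a = f a + gainR a (p + f (a + 1) - f a) v z"
  by (simp add: sPiR_eq calE_def Gpred_standard gainR_def algebra_simps)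

lemma has_real_derivative_gainR:
  assumes "-1 < z"
  shows "(gainR a K v has_real_derivative (a - 1) * (K * (1 + z) powr (- a) - v)) (at z)"
proof -
  have "(gainR a K v has_real_derivative - (K * ((1 - a) * (1 + z) powr (1 - a - 1))) - (a - 1) * v) (at z)"
    using assms unfolding gainR_def[abs_def] by (auto intro!: derivative_eq_intros)
  then show ?thesis by (simp add: algebra_simps)
qed

lemma gainR_strict_max:
  assumes "1 < a" "0 < K" "0 < v" "0 \<le> z" "z \<noteq> best_order a K v"
  shows "gainR a K v z < gainR a K v (best_order a K v)"
proof -
  define z0 where "z0 = (K / v) powr (1 / a) - 1"
  have "(1 + z0) powr (- a) = (K / v) powr (1 / a * - a)"
    using assms by (simp add: z0_def powr_powr)
  then have root: "(1 + z0) powr (- a) = v / K"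
    using assms by (simp add: powr_minus_divide)
  have "0 < 1 + z0" using assms by (simp add: z0_def)
  have above: "0 < (a - 1) * (K * (1 + t) powr (- a) - v)" if "-1 < t" "t < z0" for t
  proof -
    have "v / K < (1 + t) powr (- a)"
      unfolding root[symmetric] using that assms by (intro powr_less_mono2_neg) auto
    then have "v < K * (1 + t) powr (- a)"
      using assms by (simp add: pos_divide_less_eq mult.commute)
    then show ?thesis using assms by (intro mult_pos_pos) auto
  qed
  have below: "(a - 1) * (K * (1 + t) powr (- a) - v) < 0" if "z0 < t" for t
  proof -
    have "(1 + t) powr (- a) < v / K"
      unfolding root[symmetric] using that assms \<open>0 < 1 + z0\<close> by (intro powr_less_mono2_neg) auto
    then have "K * (1 + t) powr (- a) < v"
      using assms by (simp add: pos_less_divide_eq mult.commute)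
    then show ?thesis using assms by (intro mult_pos_neg) auto
  qed
  have best: "best_order a K v = max z0 0" by (simp add: best_order_def z0_def)
  show ?thesis
  proof (rule strict_max_by_deriv_sign[where f = "gainR a K v" and l = 0])
    show "(gainR a K v has_real_derivative (a - 1) * (K * (1 + t) powr (- a) - v)) (at t)"
      if "0 \<le> t" for t :: real
      using that by (intro has_real_derivative_gainR) simp
    show "0 < (a - 1) * (K * (1 + t) powr (- a) - v)" if "0 < t" "t < best_order a K v" for t
      using that by (intro above) (auto simp: best)
    show "(a - 1) * (K * (1 + t) powr (- a) - v) < 0" if "best_order a K v < t" for t
      using that by (intro below) (auto simp: best)
    show "0 \<le> z" "0 \<le> best_order a K v" "z \<noteq> best_order a K v"
      by (fact assms best_order_nonneg)+
  qed
qed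

lemma gainR_best_order_nonneg:
  assumes "1 < a" "0 < K" "0 < v"
  shows "0 \<le> gainR a K v (best_order a K v)"
  using gainR_strict_max[OF assms order_refl] by (cases "best_order a K v = 0") (auto simp: gainR_def)

section \<open>The manufacturer's stage problem\<close>

definition gainM :: "real \<Rightarrow> real \<Rightarrow> real \<Rightarrow> real \<Rightarrow> real \<Rightarrow> real" where
  "gainM c a K L v =
     (a - 1) * (v - c) * best_order a K v + (L - K) * (1 - (1 + best_order a K v) powr (1 - a))"

lemma sPiM_calE_eq_gainM:
  "1 < a \<Longrightarrow> sPiM c v (best_order a K v) a + calE g (best_order a K v) a
     = g a + gainM c a K (K + g (a + 1) - g a) v"
  using best_order_nonneg[of a K v]
  by (simp add: sPiM_def calE_def Gpred_standard gainM_def algebra_simps)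

text \<open>At prices v < K the retailer orders, and 1 + best_order a K v = 1 / x with
  x = (v / K) powr (1 / a) in (0, 1). Written in x the manufacturer's gain is gainM_x; its
  derivative has the sign of c - price_foc a K L x, and price_foc is increasing once positive.\<close>

definition gainM_x :: "real \<Rightarrow> real \<Rightarrow> real \<Rightarrow> real \<Rightarrow> real \<Rightarrow> real" where
  "gainM_x c a K L x = (a - 1) * (K * x powr a - c) * (1 / x - 1) + (L - K) * (1 - x powr (a - 1))"

definition price_foc :: "real \<Rightarrow> real \<Rightarrow> real \<Rightarrow> real \<Rightarrow> real" where
  "price_foc a K L x = x powr a * (L - a * K + a * K * x)"

definition price_root :: "real \<Rightarrow> real \<Rightarrow> real \<Rightarrow> real \<Rightarrow> real" where
  "price_root c a K L = (THE x. 0 < x \<and> x < 1 \<and> price_foc a K L x = c)"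

definition best_price :: "real \<Rightarrow> real \<Rightarrow> real \<Rightarrow> real \<Rightarrow> real" where
  "best_price c a K L = K * price_root c a K L powr a"

context
  fixes c a K L :: real
  assumes c_pos: "0 < c" and a_gt_1: "1 < a" and K_pos: "0 < K" and c_less_L: "c < L"
begin

lemma price_foc_strict_mono:
  assumes "0 < x" "x < y" "0 < price_foc a K L x"
  shows "price_foc a K L x < price_foc a K L y"
proof -
  have "0 < L - a * K + a * K * x"
    using assms by (simp add: price_foc_def zero_less_mult_iff)
  moreover have "L - a * K + a * K * x < L - a * K + a * K * y"
    using assms a_gt_1 K_pos by simp
  moreover have "x powr a < y powr a"
    using assms a_gt_1 by (intro powr_less_mono2) auto
  ultimately show ?thesis
    unfolding price_foc_def using assms by (intro mult_strict_mono) auto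
qed

lemma ex1_price_root: "\<exists>!x. 0 < x \<and> x < 1 \<and> price_foc a K L x = c"
proof -
  have L_pos: "0 < L" using c_pos c_less_L by simp
  define x0 where "x0 = (c / (2 * L)) powr (1 / a)"
  have ratio: "0 < c / (2 * L)" "c / (2 * L) < 1" using c_pos c_less_L by auto
  have x0: "0 < x0" "x0 < 1"
    using ratio a_gt_1 powr_less_mono2[of "1 / a" "c / (2 * L)" 1] by (auto simp: x0_def)
  have "price_foc a K L x0 \<le> x0 powr a * L"
    using x0 a_gt_1 K_pos by (auto simp: price_foc_def intro!: mult_left_mono)
  also have "\<dots> = c / 2"
    using ratio a_gt_1 L_pos c_pos by (simp add: x0_def powr_powr)
  finally have "price_foc a K L x0 \<le> c" using c_pos by simp
  moreover have "c \<le> price_foc a K L 1" using c_less_L by (simp add: price_foc_def)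
  moreover have "continuous_on {x0..1} (price_foc a K L)"
    unfolding price_foc_def[abs_def] using x0 by (intro continuous_intros) auto
  ultimately obtain x where x: "x0 \<le> x" "x \<le> 1" "price_foc a K L x = c"
    using IVT'[of "price_foc a K L" x0 c 1] x0 by auto
  then have "x \<noteq> 1" using c_less_L by (auto simp: price_foc_def)
  with x x0 have root: "0 < x \<and> x < 1 \<and> price_foc a K L x = c" by auto
  show ?thesis
  proof (rule ex1I[of _ x])
    fix y assume y: "0 < y \<and> y < 1 \<and> price_foc a K L y = c"
    show "y = x"
      using price_foc_strict_mono[of y x] price_foc_strict_mono[of x y] root y c_pos
      by (cases y x rule: linorder_cases) auto
  qed (fact root)
qed

lemma price_root: "0 < price_root c a K L" "price_root c a K L < 1" "price_foc a K L (price_root c a K L) = c"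
  using theI'[OF ex1_price_root] unfolding price_root_def by auto

lemma price_foc_less: "0 < x \<Longrightarrow> x < price_root c a K L \<Longrightarrow> price_foc a K L x < c"
  using price_foc_strict_mono[of x "price_root c a K L"] price_root c_pos by force

lemma price_foc_greater: "price_root c a K L < x \<Longrightarrow> c < price_foc a K L x"
  using price_foc_strict_mono[OF price_root(1)] price_root c_pos by simp

lemma has_real_derivative_gainM_x:
  assumes "0 < x"
  shows "(gainM_x c a K L has_real_derivative (a - 1) / x\<^sup>2 * (c - price_foc a K L x)) (at x)"
proof -
  define P where "P = x powr (a - 2)"
  have powers: "x powr (a - 1 - 1) = P" "x powr (a - 1) = x * P" "x powr a = x * (x * P)"
    using assms by (simp_all add: P_def powr_mult_base)
  show ?thesis
    unfolding gainM_x_def[abs_def] price_foc_def using assms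
    by (auto intro!: derivative_eq_intros simp: powers P_def[symmetric] power2_eq_square field_simps)
qed

lemma gainM_x_strict_max:
  assumes "0 < x" "x \<noteq> price_root c a K L"
  shows "gainM_x c a K L x < gainM_x c a K L (price_root c a K L)"
proof (rule strict_max_by_deriv_sign[where f = "gainM_x c a K L" and l = "min x (price_root c a K L)"])
  show "(gainM_x c a K L has_real_derivative (a - 1) / t\<^sup>2 * (c - price_foc a K L t)) (at t)"
    if "min x (price_root c a K L) \<le> t" for t
    using that assms price_root(1) by (intro has_real_derivative_gainM_x) auto
  show "0 < (a - 1) / t\<^sup>2 * (c - price_foc a K L t)"
    if "min x (price_root c a K L) < t" "t < price_root c a K L" for t
    using that assms price_root(1) price_foc_less[of t] a_gt_1 by auto
  show "(a - 1) / t\<^sup>2 * (c - price_foc a K L t) < 0" if "price_root c a K L < t" for t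
  proof (rule mult_pos_neg)
    show "0 < (a - 1) / t\<^sup>2" using that price_root(1) a_gt_1 by simp
    show "c - price_foc a K L t < 0" using price_foc_greater[OF that] by simp
  qed
qed (use assms in auto)

lemma gainM_x_price_root_pos: "0 < gainM_x c a K L (price_root c a K L)"
  using gainM_x_strict_max[of 1] price_root by (simp add: gainM_x_def)

lemma best_price_pos: "0 < best_price c a K L"
  using price_root K_pos by (simp add: best_price_def)

lemma best_price_less: "best_price c a K L < K"
  using price_root K_pos a_gt_1 powr_less_mono2[of a "price_root c a K L" 1]
  by (simp add: best_price_def)

lemma best_order_below_choke:
  assumes "0 < v" "v < K"
  shows "1 + best_order a K v = 1 / (v / K) powr (1 / a)" "best_order a K v > 0"
proof -
  have "(v / K) powr (1 / a) < 1"
    using assms K_pos a_gt_1 powr_less_mono2[of "1 / a" "v / K" 1] by simp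
  moreover have "(K / v) powr (1 / a) = 1 / (v / K) powr (1 / a)"
    using assms K_pos by (simp add: powr_divide)
  ultimately show "1 + best_order a K v = 1 / (v / K) powr (1 / a)" "best_order a K v > 0"
    using assms K_pos by (auto simp: best_order_def)
qed

lemma gainM_eq_gainM_x:
  assumes "0 < v" "v < K"
  shows "gainM c a K L v = gainM_x c a K L ((v / K) powr (1 / a))"
proof -
  define x where "x = (v / K) powr (1 / a)"
  have "0 < x" using assms K_pos by (simp add: x_def)
  moreover have "x powr a = v / K"
    using assms K_pos a_gt_1 by (simp add: x_def powr_powr)
  moreover have "(1 / x) powr (1 - a) = x powr (a - 1)"
    using \<open>0 < x\<close> by (simp add: powr_divide powr_minus_divide[symmetric] powr_minus)
  ultimately show ?thesis
    using best_order_below_choke[OF assms] K_pos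
    by (simp add: gainM_def gainM_x_def x_def[symmetric] eq_diff_eq)
qed

lemma gainM_above_choke: "0 < v \<Longrightarrow> K \<le> v \<Longrightarrow> gainM c a K L v = 0"
  using K_pos a_gt_1 powr_mono2[of "1 / a" "K / v" 1] by (simp add: gainM_def best_order_def)

lemma root_best_price: "(best_price c a K L / K) powr (1 / a) = price_root c a K L"
  using price_root K_pos a_gt_1 by (simp add: best_price_def powr_powr)

lemma gainM_best_price_eq_gainM_x: "gainM c a K L (best_price c a K L) = gainM_x c a K L (price_root c a K L)"
  using gainM_eq_gainM_x[OF best_price_pos best_price_less] root_best_price by simp

lemma gainM_strict_max:
  assumes "0 < v" "v \<noteq> best_price c a K L"
  shows "gainM c a K L v < gainM c a K L (best_price c a K L)"
proof (cases "v < K")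
  case True
  have "(v / K) powr (1 / a) \<noteq> price_root c a K L"
  proof
    assume "(v / K) powr (1 / a) = price_root c a K L"
    then have "price_root c a K L powr a = ((v / K) powr (1 / a)) powr a" by simp
    also have "\<dots> = v / K" using assms K_pos a_gt_1 by (simp add: powr_powr)
    finally have "price_root c a K L powr a = v / K" .
    then show False using assms K_pos by (simp add: best_price_def)
  qed
  then show ?thesis
    using gainM_x_strict_max assms K_pos by (simp add: gainM_eq_gainM_x[OF assms(1) True] gainM_best_price_eq_gainM_x)
next
  case False
  then show ?thesis
    using assms gainM_above_choke gainM_best_price_eq_gainM_x gainM_x_price_root_pos by simp
qed

lemma best_order_best_price:
  "best_order a K (best_price c a K L) = 1 / price_root c a K L - 1"
  "best_order a K (best_price c a K L) = (K / best_price c a K L) powr (1 / a) - 1"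
  "0 < best_order a K (best_price c a K L)"
proof -
  have "(K / best_price c a K L) powr (1 / a) = inverse ((best_price c a K L / K) powr (1 / a))"
    by (simp add: inverse_powr[symmetric])
  then have "(K / best_price c a K L) powr (1 / a) = 1 / price_root c a K L"
    using root_best_price by (simp add: divide_inverse)
  then show "best_order a K (best_price c a K L) = 1 / price_root c a K L - 1"
    "best_order a K (best_price c a K L) = (K / best_price c a K L) powr (1 / a) - 1"
    using best_order_below_choke(1)[OF best_price_pos best_price_less] root_best_price by simp_all
  show "0 < best_order a K (best_price c a K L)"
    by (rule best_order_below_choke(2)[OF best_price_pos best_price_less])
qed

lemma best_price_in_root:
  defines "x \<equiv> price_root c a K L"
  shows "(1 + best_order a K (best_price c a K L)) powr (1 - a) = x powr (a - 1)"
    and "best_price c a K L = K * (x * x powr (a - 1))"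
    and "c = x * x powr (a - 1) * (L - a * K + a * K * x)"
proof -
  have x: "0 < x" unfolding x_def by (fact price_root)
  have "x powr a = x * x powr (a - 1)"
    using x by (simp add: powr_mult_base)
  then show "best_price c a K L = K * (x * x powr (a - 1))"
    "c = x * x powr (a - 1) * (L - a * K + a * K * x)"
    using price_root(3) by (simp_all add: best_price_def price_foc_def x_def)
  show "(1 + best_order a K (best_price c a K L)) powr (1 - a) = x powr (a - 1)"
    using x by (simp add: best_order_best_price(1) x_def[symmetric] powr_divide
        powr_minus_divide[symmetric] powr_minus)
qed

lemma gainR_best_price:
  "gainR a K (best_price c a K L) (best_order a K (best_price c a K L))
     = K - best_price c a K L * (1 + a * best_order a K (best_price c a K L))"
proof -
  define x where "x = price_root c a K L"
  define w where "w = best_price c a K L"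
  have "0 < x" unfolding x_def by (fact price_root)
  moreover note best_price_in_root(1,2)[folded x_def w_def]
  ultimately show ?thesis
    unfolding gainR_def w_def[symmetric] best_order_best_price(1)[folded x_def w_def]
    by (simp add: field_simps)
qed

lemma gainM_best_price:
  "gainM c a K L (best_price c a K L)
     = L - K + best_price c a K L - c * (1 + a * best_order a K (best_price c a K L))"
proof -
  define x where "x = price_root c a K L"
  define w where "w = best_price c a K L"
  have "0 < x" unfolding x_def by (fact price_root)
  moreover note best_price_in_root(1,2)[folded x_def w_def]
  ultimately show ?thesis
    unfolding gainM_def w_def[symmetric] best_order_best_price(1)[folded x_def w_def]
    by (simp add: best_price_in_root(3)[folded x_def] field_simps)
qed

lemma best_price_fixed_point:
  "best_price c a K L
     = K * (1 - 1 / a + c / (a * best_price c a K L) - (L - K) / (a * K)) powr a"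
proof -
  define x where "x = price_root c a K L"
  define w where "w = best_price c a K L"
  have "0 < x" unfolding x_def by (fact price_root)
  then have "1 - 1 / a + c / (a * w) - (L - K) / (a * K) = x"
    using best_price_in_root(2)[folded x_def w_def] K_pos a_gt_1
    by (simp add: best_price_in_root(3)[folded x_def] field_simps)
  then show ?thesis by (simp add: best_price_def x_def w_def)
qed

end

section \<open>The equilibrium by backward induction\<close>

text \<open>X and Y are the continuation values (f^R, f^M) at the beliefs a and a + 1.\<close>

definition bellman_step :: "real \<Rightarrow> real \<Rightarrow> real \<Rightarrow> real \<times> real \<Rightarrow> real \<times> real \<Rightarrow> real \<times> real" where
  "bellman_step p c a X Y =
     (let K = p + fst Y - fst X; L = K + snd Y - snd X; w = best_price c a K L
      in (fst X + gainR a K w (best_order a K w), snd X + gainM c a K L w))"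

lemma bellman_step_payoffs:
  assumes "0 < c" "1 < a"
    and "0 < p + fst Y - fst X" "c < p + fst Y - fst X + snd Y - snd X"
  defines "w \<equiv> best_price c a (p + fst Y - fst X) (p + fst Y - fst X + snd Y - snd X)"
  defines "z \<equiv> best_order a (p + fst Y - fst X) w"
  shows "bellman_step p c a X Y = (fst Y + p - w * (1 + a * z), snd Y + w - c * (1 + a * z))"
  using gainR_best_price[OF assms(1-4)] gainM_best_price[OF assms(1-4)]
  by (simp add: bellman_step_def Let_def w_def z_def)

lemma bellman_step_bounds:
  assumes "0 < c" "1 < a"
    and K: "0 < p + fst Y - fst X" and L: "c < p + fst Y - fst X + snd Y - snd X"
  defines "S \<equiv> bellman_step p c a X Y"
  shows "fst X \<le> fst S" "fst S < fst Y + p"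
    "fst X + snd X \<le> fst S + snd S" "fst S + snd S < fst Y + snd Y + p - c"
proof -
  define K L where "K = p + fst Y - fst X" and "L = p + fst Y - fst X + snd Y - snd X"
  define w where "w = best_price c a K L"
  define z where "z = best_order a K w"
  have margins: "0 < K" "c < L" using K L by (simp_all add: K_def L_def)
  have "0 < w" "0 < a * z"
    using best_price_pos[OF assms(1,2) margins] best_order_best_price(3)[OF assms(1,2) margins] assms(2)
    by (simp_all add: w_def z_def)
  then have "0 < w * (1 + a * z)" "w < w * (1 + a * z)" "c < c * (1 + a * z)"
    using assms(1) by (simp_all add: distrib_left add_pos_pos)
  moreover have "0 \<le> gainR a K w z" "0 < gainM c a K L w"
    using gainR_best_order_nonneg[OF assms(2) margins(1) \<open>0 < w\<close>]
      gainM_best_price_eq_gainM_x[OF assms(1,2) margins] gainM_x_price_root_pos[OF assms(1,2) margins]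
    by (simp_all add: w_def z_def)
  moreover have "fst S = fst X + gainR a K w z" "snd S = snd X + gainM c a K L w"
    by (simp_all add: S_def bellman_step_def Let_def K_def L_def w_def z_def)
  moreover have "fst S = fst Y + p - w * (1 + a * z)" "snd S = snd Y + w - c * (1 + a * z)"
    using bellman_step_payoffs[OF assms(1-4)] by (simp_all add: S_def K_def L_def w_def z_def)
  ultimately show "fst X \<le> fst S" "fst S < fst Y + p"
    "fst X + snd X \<le> fst S + snd S" "fst S + snd S < fst Y + snd Y + p - c"
    by linarith+
qed

fun values_to_go :: "real \<Rightarrow> real \<Rightarrow> nat \<Rightarrow> real \<Rightarrow> real \<times> real" where
  "values_to_go p c 0 a = (0, 0)"
| "values_to_go p c (Suc n) a = bellman_step p c a (values_to_go p c n a) (values_to_go p c n (a + 1))"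

lemma values_to_go_margins:
  assumes "0 < c" "c < p" "1 < a"
  shows "0 < p + fst (values_to_go p c n (a + 1)) - fst (values_to_go p c n a)
    \<and> c < p + fst (values_to_go p c n (a + 1)) - fst (values_to_go p c n a)
          + snd (values_to_go p c n (a + 1)) - snd (values_to_go p c n a)"
  using assms(3)
proof (induction n arbitrary: a)
  case 0
  then show ?case using assms by simp
next
  case (Suc n)
  define X Y Z where "X = values_to_go p c n a" and "Y = values_to_go p c n (a + 1)"
    and "Z = values_to_go p c n (a + 1 + 1)"
  have "1 < a + 1" using Suc.prems by simp
  have "fst (bellman_step p c a X Y) < fst Y + p"
    "fst (bellman_step p c a X Y) + snd (bellman_step p c a X Y) < fst Y + snd Y + p - c"
    using bellman_step_bounds[OF assms(1) Suc.prems] Suc.IH[OF Suc.prems] by (simp_all add: X_def Y_def)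
  moreover have "fst Y \<le> fst (bellman_step p c (a + 1) Y Z)"
    "fst Y + snd Y \<le> fst (bellman_step p c (a + 1) Y Z) + snd (bellman_step p c (a + 1) Y Z)"
    using bellman_step_bounds[OF assms(1) \<open>1 < a + 1\<close>] Suc.IH[OF \<open>1 < a + 1\<close>]
    by (simp_all add: Y_def Z_def)
  ultimately show ?case by (simp add: X_def Y_def Z_def)
qed

text \<open>The candidate equilibrium for horizon T; period t has Suc T - t periods to go.\<close>

definition fRstar :: "real \<Rightarrow> real \<Rightarrow> nat \<Rightarrow> nat \<Rightarrow> real \<Rightarrow> real" where
  "fRstar p c T t a = fst (values_to_go p c (Suc T - t) a)"

definition fMstar :: "real \<Rightarrow> real \<Rightarrow> nat \<Rightarrow> nat \<Rightarrow> real \<Rightarrow> real" where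
  "fMstar p c T t a = snd (values_to_go p c (Suc T - t) a)"

definition Kstar :: "real \<Rightarrow> real \<Rightarrow> nat \<Rightarrow> nat \<Rightarrow> real \<Rightarrow> real" where
  "Kstar p c T t a = p + fRstar p c T (Suc t) (a + 1) - fRstar p c T (Suc t) a"

definition Lstar :: "real \<Rightarrow> real \<Rightarrow> nat \<Rightarrow> nat \<Rightarrow> real \<Rightarrow> real" where
  "Lstar p c T t a = Kstar p c T t a + fMstar p c T (Suc t) (a + 1) - fMstar p c T (Suc t) a"

definition wstar :: "real \<Rightarrow> real \<Rightarrow> nat \<Rightarrow> nat \<Rightarrow> real \<Rightarrow> real" where
  "wstar p c T t a = best_price c a (Kstar p c T t a) (Lstar p c T t a)"

definition zstar :: "real \<Rightarrow> real \<Rightarrow> nat \<Rightarrow> nat \<Rightarrow> real \<Rightarrow> real \<Rightarrow> real" where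
  "zstar p c T t a v = best_order a (Kstar p c T t a) v"

definition fRhstar :: "real \<Rightarrow> real \<Rightarrow> nat \<Rightarrow> nat \<Rightarrow> real \<Rightarrow> real \<Rightarrow> real" where
  "fRhstar p c T t a v =
     (if t \<le> T then sPiR p v (zstar p c T t a v) a + calE (fRstar p c T (Suc t)) (zstar p c T t a v) a
      else 0)"

lemma fRstar_final: "fRstar p c T (Suc T) a = 0"
  and fMstar_final: "fMstar p c T (Suc T) a = 0"
  by (simp_all add: fRstar_def fMstar_def)

lemma margins_star:
  assumes "0 < c" "c < p" "1 < a"
  shows "0 < Kstar p c T t a" "c < Lstar p c T t a"
  using values_to_go_margins[OF assms, of "Suc T - Suc t"]
  by (simp_all add: Kstar_def Lstar_def fRstar_def fMstar_def)

lemma wstar_pos: "0 < c \<Longrightarrow> c < p \<Longrightarrow> 1 < a \<Longrightarrow> 0 < wstar p c T t a"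
  unfolding wstar_def using best_price_pos margins_star by blast

lemma values_star_step:
  assumes "t \<le> T"
  shows "(fRstar p c T t a, fMstar p c T t a)
    = bellman_step p c a (fRstar p c T (Suc t) a, fMstar p c T (Suc t) a)
        (fRstar p c T (Suc t) (a + 1), fMstar p c T (Suc t) (a + 1))"
proof -
  have "Suc T - t = Suc (Suc T - Suc t)" using assms by simp
  then show ?thesis by (simp add: fRstar_def fMstar_def)
qed

lemma fRstar_bellman:
  "t \<le> T \<Longrightarrow> fRstar p c T t a
     = fRstar p c T (Suc t) a + gainR a (Kstar p c T t a) (wstar p c T t a) (zstar p c T t a (wstar p c T t a))"
  using values_star_step[of t T p c a]
  by (simp add: bellman_step_def Let_def Kstar_def Lstar_def wstar_def zstar_def)

lemma fMstar_bellman: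
  "t \<le> T \<Longrightarrow> fMstar p c T t a
     = fMstar p c T (Suc t) a + gainM c a (Kstar p c T t a) (Lstar p c T t a) (wstar p c T t a)"
  using values_star_step[of t T p c a]
  by (simp add: bellman_step_def Let_def Kstar_def Lstar_def wstar_def)

lemma values_star_payoffs:
  assumes "0 < c" "c < p" "1 < a" "t \<le> T"
  defines "w \<equiv> wstar p c T t a"
  defines "z \<equiv> zstar p c T t a (wstar p c T t a)"
  shows "fRstar p c T t a = p - w * (1 + a * z) + fRstar p c T (Suc t) (a + 1)"
    and "fMstar p c T t a = w - c * (1 + a * z) + fMstar p c T (Suc t) (a + 1)"
  using values_star_step[OF assms(4), of p c a] margins_star[OF assms(1-3), of T t]
    bellman_step_payoffs[OF assms(1,3), of p "(fRstar p c T (Suc t) (a + 1), fMstar p c T (Suc t) (a + 1))"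
      "(fRstar p c T (Suc t) a, fMstar p c T (Suc t) a)"]
  by (simp_all add: w_def z_def wstar_def zstar_def Kstar_def Lstar_def)

lemma sum_by_backward_recursion:
  fixes F g :: "nat \<Rightarrow> real \<Rightarrow> real"
  assumes closed: "\<And>a. P a \<Longrightarrow> P (a + 1)"
    and final: "\<And>a. F (Suc T) a = 0"
    and step: "\<And>t a. t \<le> T \<Longrightarrow> P a \<Longrightarrow> F t a = g t a + F (Suc t) (a + 1)"
  shows "t \<le> T \<Longrightarrow> P a \<Longrightarrow> F t a = (\<Sum>i=0..T-t. g (t + i) (a + real i))"
proof (induction "T - t" arbitrary: t a)
  case 0
  then show ?case using step[of t a] final[of "a + 1"] by simp
next
  case (Suc n)
  then have "n = T - Suc t" "Suc t \<le> T" "T - t = Suc (T - Suc t)" by simp_all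
  have "F t a = g t a + F (Suc t) (a + 1)"
    using step Suc.prems by simp
  also have "F (Suc t) (a + 1) = (\<Sum>i=0..T - Suc t. g (Suc t + i) (a + 1 + real i))"
    using Suc.hyps(1) \<open>n = T - Suc t\<close> \<open>Suc t \<le> T\<close> closed Suc.prems(2) by blast
  also have "g t a + \<dots> = (\<Sum>i=0..Suc (T - Suc t). g (t + i) (a + real i))"
    by (subst sum.atLeast0_atMost_Suc_shift) (simp add: algebra_simps)
  finally show ?case using \<open>T - t = Suc (T - Suc t)\<close> by simp
qed

section \<open>The standardized Markov perfect strategies\<close>

abbreviation std_objR :: "real \<Rightarrow> (real \<Rightarrow> real) \<Rightarrow> real \<Rightarrow> real \<Rightarrow> real \<Rightarrow> real" where
  "std_objR p f a v z \<equiv> sPiR p v z a + calE f z a"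

abbreviation std_objM :: "real \<Rightarrow> (real \<Rightarrow> real) \<Rightarrow> real \<Rightarrow> real \<Rightarrow> real \<Rightarrow> real" where
  "std_objM c g a v z \<equiv> sPiM c v z a + calE g z a"

lemma retailer_strict_opt:
  assumes "0 < c" "c < p" "1 < a" "0 < v" "0 \<le> z" "z \<noteq> zstar p c T t a v"
  shows "std_objR p (fRstar p c T (Suc t)) a v z
    < std_objR p (fRstar p c T (Suc t)) a v (zstar p c T t a v)"
  using gainR_strict_max[OF assms(3) margins_star(1)[OF assms(1-3)] assms(4,5)] assms(6)
  by (simp add: sPiR_calE_eq_gainR[OF assms(3)] assms(5) best_order_nonneg zstar_def Kstar_def)

lemma manufacturer_strict_opt:
  assumes "0 < c" "c < p" "1 < a" "0 < v" "v \<noteq> wstar p c T t a"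
  shows "std_objM c (fMstar p c T (Suc t)) a v (zstar p c T t a v)
    < std_objM c (fMstar p c T (Suc t)) a (wstar p c T t a) (zstar p c T t a (wstar p c T t a))"
  using gainM_strict_max[OF assms(1,3) margins_star[OF assms(1-3)] assms(4)] assms(5)
  by (simp add: sPiM_calE_eq_gainM[OF assms(3)] zstar_def wstar_def Lstar_def)

lemma std_objR_star:
  "1 < a \<Longrightarrow> t \<le> T \<Longrightarrow>
    std_objR p (fRstar p c T (Suc t)) a (wstar p c T t a) (zstar p c T t a (wstar p c T t a))
      = fRstar p c T t a"
  by (simp add: sPiR_calE_eq_gainR best_order_nonneg zstar_def fRstar_bellman[of t T] Kstar_def)

lemma std_objM_star:
  "1 < a \<Longrightarrow> t \<le> T \<Longrightarrow>
    std_objM c (fMstar p c T (Suc t)) a (wstar p c T t a) (zstar p c T t a (wstar p c T t a))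
      = fMstar p c T t a"
  by (simp add: sPiM_calE_eq_gainM zstar_def fMstar_bellman[of t T] Lstar_def)

lemma maximizer_unique:
  fixes F :: "'a \<Rightarrow> 'b::linorder"
  assumes "x \<in> S" "\<forall>y\<in>S. F y \<le> F x" "x0 \<in> S" "\<And>y. y \<in> S \<Longrightarrow> y \<noteq> x0 \<Longrightarrow> F y < F x0"
  shows "x = x0"
  using assms by (meson not_less)

lemma Aset_gt_1: "1 < a1 \<Longrightarrow> a \<in> Aset a1 \<Longrightarrow> 1 < a"
  by (auto simp: Aset_def)

lemma Aset_add_1: "a \<in> Aset a1 \<Longrightarrow> a + 1 \<in> Aset a1"
  by (auto simp: Aset_def intro: exI[of _ "Suc n" for n])

lemma smps_values_star:
  assumes "0 < c" "c < p" "1 < a1"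
  shows "smps_values p c T a1 (wstar p c T) (zstar p c T) (fRstar p c T) (fMstar p c T) (fRhstar p c T)"
  unfolding smps_values_def
proof (intro conjI ballI)
  fix t a v assume t: "t \<in> {1..T}" and a: "a \<in> Aset a1" and v: "v \<in> Wset"
  have "1 < a" "0 < v" using Aset_gt_1[OF assms(3) a] v by (auto simp: Wset_def)
  then show "std_objR p (fRstar p c T (Suc t)) a v z' \<le> std_objR p (fRstar p c T (Suc t)) a v (zstar p c T t a v)"
    if "z' \<in> Qset" for z'
    using retailer_strict_opt[OF assms(1,2)] that by (fastforce simp: Qset_def)
  show "zstar p c T t a v \<in> Qset" by (simp add: Qset_def zstar_def best_order_nonneg)
  show "fRhstar p c T t a v = std_objR p (fRstar p c T (Suc t)) a v (zstar p c T t a v)"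
    using t by (simp add: fRhstar_def)
next
  fix t a assume t: "t \<in> {1..T}" and a: "a \<in> Aset a1"
  have "1 < a" "t \<le> T" using Aset_gt_1[OF assms(3) a] t by auto
  then show "wstar p c T t a \<in> Wset"
    using wstar_pos[OF assms(1,2)] by (simp add: Wset_def)
  show "std_objM c (fMstar p c T (Suc t)) a v (zstar p c T t a v)
      \<le> std_objM c (fMstar p c T (Suc t)) a (wstar p c T t a) (zstar p c T t a (wstar p c T t a))"
    if "v \<in> Wset" for v
    using manufacturer_strict_opt[OF assms(1,2) \<open>1 < a\<close>] that by (fastforce simp: Wset_def)
  show "fMstar p c T t a
      = std_objM c (fMstar p c T (Suc t)) a (wstar p c T t a) (zstar p c T t a (wstar p c T t a))"
    using std_objM_star[OF \<open>1 < a\<close> \<open>t \<le> T\<close>] by simp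
  show "fRstar p c T t a = fRhstar p c T t a (wstar p c T t a)"
    using std_objR_star[OF \<open>1 < a\<close> \<open>t \<le> T\<close>] by (simp add: fRhstar_def \<open>t \<le> T\<close>)
qed (simp_all add: fRstar_final fMstar_final fRhstar_def)

lemma smps_values_stageD:
  assumes "smps_values p c T a1 w z fR fM fRh" "t \<in> {1..T}" "a \<in> Aset a1"
  shows "\<forall>v\<in>Wset. z t a v \<in> Qset
      \<and> (\<forall>y\<in>Qset. std_objR p (fR (Suc t)) a v y \<le> std_objR p (fR (Suc t)) a v (z t a v))
      \<and> fRh t a v = std_objR p (fR (Suc t)) a v (z t a v)"
    and "w t a \<in> Wset
      \<and> (\<forall>v\<in>Wset. std_objM c (fM (Suc t)) a v (z t a v) \<le> std_objM c (fM (Suc t)) a (w t a) (z t a (w t a)))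
      \<and> fM t a = std_objM c (fM (Suc t)) a (w t a) (z t a (w t a))"
    and "fR t a = fRh t a (w t a)"
  using assms unfolding smps_values_def by blast+

lemma smps_stage_unique:
  assumes "0 < c" "c < p" "1 < a1"
    and S: "smps_values p c T a1 w z fR fM fRh"
    and t: "t \<in> {1..T}" and a: "a \<in> Aset a1"
    and later: "\<forall>a\<in>Aset a1. fR (Suc t) a = fRstar p c T (Suc t) a \<and> fM (Suc t) a = fMstar p c T (Suc t) a"
  shows "(\<forall>v\<in>Wset. z t a v = zstar p c T t a v) \<and> w t a = wstar p c T t a
    \<and> fR t a = fRstar p c T t a \<and> fM t a = fMstar p c T t a"
proof -
  have "1 < a" "t \<le> T" using Aset_gt_1[OF assms(3) a] t by auto
  have calE_later: "calE (fR (Suc t)) y a = calE (fRstar p c T (Suc t)) y a"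
    "calE (fM (Suc t)) y a = calE (fMstar p c T (Suc t)) y a" for y
    using later a Aset_add_1[OF a] by (simp_all add: calE_def)
  have retailer: "z t a v \<in> Qset"
    "\<forall>y\<in>Qset. std_objR p (fRstar p c T (Suc t)) a v y \<le> std_objR p (fRstar p c T (Suc t)) a v (z t a v)"
    "fRh t a v = std_objR p (fRstar p c T (Suc t)) a v (z t a v)" if "v \<in> Wset" for v
    using smps_values_stageD(1)[OF S t a] that by (simp_all add: calE_later)
  have manufacturer: "w t a \<in> Wset"
    "\<forall>v\<in>Wset. std_objM c (fMstar p c T (Suc t)) a v (z t a v)
        \<le> std_objM c (fMstar p c T (Suc t)) a (w t a) (z t a (w t a))"
    "fM t a = std_objM c (fMstar p c T (Suc t)) a (w t a) (z t a (w t a))"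
    using smps_values_stageD(2)[OF S t a] by (simp_all add: calE_later)
  have z_eq: "z t a v = zstar p c T t a v" if v: "v \<in> Wset" for v
    using retailer_strict_opt[OF assms(1,2) \<open>1 < a\<close>] v retailer[OF v]
    by (intro maximizer_unique[where S = Qset]) (auto simp: Wset_def Qset_def zstar_def best_order_nonneg)
  have w_eq: "w t a = wstar p c T t a"
    using manufacturer_strict_opt[OF assms(1,2) \<open>1 < a\<close>] manufacturer(1,2)
      wstar_pos[OF assms(1,2) \<open>1 < a\<close>]
    by (intro maximizer_unique[where S = Wset]) (auto simp: Wset_def z_eq)
  show ?thesis
    using z_eq w_eq manufacturer retailer(3)[OF manufacturer(1)] smps_values_stageD(3)[OF S t a]
      std_objR_star[OF \<open>1 < a\<close> \<open>t \<le> T\<close>] std_objM_star[OF \<open>1 < a\<close> \<open>t \<le> T\<close>]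
    by auto
qed

lemma smps_unique:
  assumes "0 < c" "c < p" "1 < a1"
    and S: "smps_values p c T a1 w z fR fM fRh"
    and t: "t \<in> {1..T}" and a: "a \<in> Aset a1"
  shows "w t a = wstar p c T t a \<and> (\<forall>v\<in>Wset. z t a v = zstar p c T t a v)"
proof -
  have "\<forall>a\<in>Aset a1. fR (Suc t) a = fRstar p c T (Suc t) a \<and> fM (Suc t) a = fMstar p c T (Suc t) a"
  proof (rule inc_induct[of "Suc t" "Suc T"])
    show "\<forall>a\<in>Aset a1. fR (Suc T) a = fRstar p c T (Suc T) a \<and> fM (Suc T) a = fMstar p c T (Suc T) a"
      using S by (simp add: smps_values_def fRstar_final fMstar_final)
  next
    fix n assume "Suc t \<le> n" "n < Suc T"
      and "\<forall>a\<in>Aset a1. fR (Suc n) a = fRstar p c T (Suc n) a \<and> fM (Suc n) a = fMstar p c T (Suc n) a"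
    then show "\<forall>a\<in>Aset a1. fR n a = fRstar p c T n a \<and> fM n a = fMstar p c T n a"
      using smps_stage_unique[OF assms(1-4), of n] by auto
  qed (use t in auto)
  then show ?thesis using smps_stage_unique[OF assms(1-4) t a] by blast
qed

lemma wstar_fixed_point:
  assumes "0 < c" "c < p" "1 < a"
  shows "wstar p c T t a = (p + fRstar p c T (Suc t) (a + 1) - fRstar p c T (Suc t) a)
    * (1 - 1 / a + c / (a * wstar p c T t a)
       - (fMstar p c T (Suc t) (a + 1) - fMstar p c T (Suc t) a)
         / (a * (p + fRstar p c T (Suc t) (a + 1) - fRstar p c T (Suc t) a))) powr a"
  using best_price_fixed_point[OF assms(1,3) margins_star[OF assms, of T t]]
  by (simp add: wstar_def Lstar_def Kstar_def)

lemma zstar_wstar: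
  assumes "0 < c" "c < p" "1 < a"
  shows "zstar p c T t a (wstar p c T t a)
    = ((p + fRstar p c T (Suc t) (a + 1) - fRstar p c T (Suc t) a) / wstar p c T t a) powr (1 / a) - 1"
  using best_order_best_price(2)[OF assms(1,3) margins_star[OF assms, of T t]]
  by (simp add: zstar_def wstar_def Kstar_def)

lemma fRstar_sum:
  assumes "0 < c" "c < p" "t \<le> T" "1 < a"
  shows "fRstar p c T t a = (\<Sum>i=0..T-t. p - wstar p c T (t + i) (a + real i)
    * (1 + (a + real i) * zstar p c T (t + i) (a + real i) (wstar p c T (t + i) (a + real i))))"
  using sum_by_backward_recursion[where P = "\<lambda>a. 1 < a" and F = "fRstar p c T"
      and g = "\<lambda>t a. p - wstar p c T t a * (1 + a * zstar p c T t a (wstar p c T t a))"]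
    values_star_payoffs(1)[OF assms(1,2)] fRstar_final assms
  by simp

lemma fMstar_sum:
  assumes "0 < c" "c < p" "t \<le> T" "1 < a"
  shows "fMstar p c T t a = (\<Sum>i=0..T-t. wstar p c T (t + i) (a + real i)
    - c * (1 + (a + real i) * zstar p c T (t + i) (a + real i) (wstar p c T (t + i) (a + real i))))"
  using sum_by_backward_recursion[where P = "\<lambda>a. 1 < a" and F = "fMstar p c T"
      and g = "\<lambda>t a. wstar p c T t a - c * (1 + a * zstar p c T t a (wstar p c T t a))"]
    values_star_payoffs(2)[OF assms(1,2)] fMstar_final assms
  by simp

lemma star_closed_form:
  assumes "0 < c" "c < p" "t \<le> T" "1 < a"
  shows "wstar p c T t a = (p + fRstar p c T (Suc t) (a + 1) - fRstar p c T (Suc t) a)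
        * (1 - 1 / a + c / (a * wstar p c T t a)
           - (fMstar p c T (Suc t) (a + 1) - fMstar p c T (Suc t) a)
             / (a * (p + fRstar p c T (Suc t) (a + 1) - fRstar p c T (Suc t) a))) powr a \<and>
      (\<forall>v\<in>Wset. zstar p c T t a v
          = max (((p + fRstar p c T (Suc t) (a + 1) - fRstar p c T (Suc t) a) / v) powr (1 / a) - 1) 0) \<and>
      zstar p c T t a (wstar p c T t a)
        = ((p + fRstar p c T (Suc t) (a + 1) - fRstar p c T (Suc t) a) / wstar p c T t a) powr (1 / a) - 1 \<and>
      fRstar p c T t a = (\<Sum>i=0..T-t. p - wstar p c T (t + i) (a + real i)
        * (1 + (a + real i) * zstar p c T (t + i) (a + real i) (wstar p c T (t + i) (a + real i)))) \<and>
      fMstar p c T t a = (\<Sum>i=0..T-t. wstar p c T (t + i) (a + real i)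
        - c * (1 + (a + real i) * zstar p c T (t + i) (a + real i) (wstar p c T (t + i) (a + real i))))"
  using assms
  by (intro conjI ballI wstar_fixed_point zstar_wstar fRstar_sum fMstar_sum)
     (simp_all add: zstar_def best_order_def Kstar_def)

section \<open>The Markov perfect equilibrium\<close>

lemma Bset_pos: "0 < b1 \<Longrightarrow> b \<in> Bset b1 \<Longrightarrow> 0 < b"
  by (simp add: Bset_def)

lemma mpe_objR_eq_scaled:
  assumes "1 < a" "0 < b" "0 \<le> q"
  shows "PiR p v q a b + Epred a b (\<lambda>d. case_prod (unstandardize g) (Phi a b q d))
    = b / (a - 1) * std_objR p g a v (q / b)"
  using assms by (simp add: PiR_eq_scaled_sPiR Epred_unstandardize_Phi_eq algebra_simps)

lemma mpe_objM_eq_scaled: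
  assumes "1 < a" "0 < b" "0 \<le> q"
  shows "PiM c v q + Epred a b (\<lambda>d. case_prod (unstandardize g) (Phi a b q d))
    = b / (a - 1) * std_objM c g a v (q / b)"
  using assms by (simp add: PiM_eq_scaled_sPiM Epred_unstandardize_Phi_eq algebra_simps)

lemma Epred_Phi_cong:
  assumes "1 < a1" "0 < b1" "a \<in> Aset a1" "b \<in> Bset b1" "0 \<le> q"
    and int: "integrable (pred a b) (\<lambda>d. case_prod V (Phi a b q d))"
    and V: "\<forall>a'\<in>Aset a1. \<forall>b'\<in>Bset b1. V a' b' = unstandardize g a' b'"
  shows "Epred a b (\<lambda>d. case_prod V (Phi a b q d))
    = Epred a b (\<lambda>d. case_prod (unstandardize g) (Phi a b q d))"
proof -
  have "1 < a" "0 < b" using Aset_gt_1 Bset_pos assms(1-4) by auto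
  have "AE d in pred a b. 0 \<le> d" using AE_pred_nonneg \<open>1 < a\<close> \<open>0 < b\<close> by simp
  then have "AE d in pred a b. case_prod V (Phi a b q d) = case_prod (unstandardize g) (Phi a b q d)"
  proof (rule AE_mp, intro AE_I2 impI)
    fix d :: real assume "0 \<le> d"
    then have "Phi a b q d \<in> Aset a1 \<times> Bset b1"
      using assms(3-5) Aset_add_1[of a a1] by (auto simp: Phi_def Bset_def)
    then show "case_prod V (Phi a b q d) = case_prod (unstandardize g) (Phi a b q d)"
      using V by auto
  qed
  then show ?thesis
    unfolding Epred_def
    using int integrable_unstandardize_Phi[OF \<open>1 < a\<close> \<open>0 < b\<close> assms(5)]
    by (intro integral_cong_AE) (auto dest: borel_measurable_integrable)
qed

lemma mpe_values_of_smps_values: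
  assumes "1 < a1" "0 < b1" and S: "smps_values p c T a1 w z fR fM fRh"
  shows "mpe_values p c T a1 b1 (\<lambda>t a b. w t a) (\<lambda>t a b v. b * z t a v)
    (\<lambda>t. unstandardize (fR t)) (\<lambda>t. unstandardize (fM t)) (\<lambda>t a b v. b * fRh t a v / (a - 1))"
  unfolding mpe_values_def
proof (intro conjI ballI)
  fix t a b v assume t: "t \<in> {1..T}" and a: "a \<in> Aset a1" and b: "b \<in> Bset b1" and v: "v \<in> Wset"
  have "1 < a" "0 < b" using Aset_gt_1 Bset_pos assms(1,2) a b by auto
  note retailer = smps_values_stageD(1)[OF S t a, rule_format, OF v]
  have z: "0 \<le> b * z t a v" "b * z t a v / b = z t a v"
    using retailer \<open>0 < b\<close> by (auto simp: Qset_def)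
  show "integrable (pred a b) (\<lambda>d. case_prod (unstandardize (fR (Suc t))) (Phi a b q' d))"
    if "q' \<in> Qset" for q'
    using integrable_unstandardize_Phi \<open>1 < a\<close> \<open>0 < b\<close> that by (simp add: Qset_def)
  show "PiR p v q' a b + Epred a b (\<lambda>d. case_prod (unstandardize (fR (Suc t))) (Phi a b q' d))
    \<le> PiR p v (b * z t a v) a b + Epred a b (\<lambda>d. case_prod (unstandardize (fR (Suc t))) (Phi a b (b * z t a v) d))"
    if "q' \<in> Qset" for q'
  proof -
    have "0 \<le> q'" using that by (simp add: Qset_def)
    then have "std_objR p (fR (Suc t)) a v (q' / b) \<le> std_objR p (fR (Suc t)) a v (z t a v)"
      using retailer \<open>0 < b\<close> by (simp add: Qset_def)
    then show ?thesis
      unfolding mpe_objR_eq_scaled[OF \<open>1 < a\<close> \<open>0 < b\<close> \<open>0 \<le> q'\<close>]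
        mpe_objR_eq_scaled[OF \<open>1 < a\<close> \<open>0 < b\<close> z(1)] z(2)
      using \<open>1 < a\<close> \<open>0 < b\<close> by (intro mult_left_mono) auto
  qed
  show "b * fRh t a v / (a - 1)
    = PiR p v (b * z t a v) a b + Epred a b (\<lambda>d. case_prod (unstandardize (fR (Suc t))) (Phi a b (b * z t a v) d))"
    using retailer \<open>1 < a\<close> \<open>0 < b\<close> by (simp add: mpe_objR_eq_scaled z)
next
  fix t a b assume t: "t \<in> {1..T}" and a: "a \<in> Aset a1" and b: "b \<in> Bset b1"
  have "1 < a" "0 < b" using Aset_gt_1 Bset_pos assms(1,2) a b by auto
  have z: "0 \<le> b * z t a v" "b * z t a v / b = z t a v" if "v \<in> Wset" for v
    using smps_values_stageD(1)[OF S t a] that \<open>0 < b\<close> by (auto simp: Qset_def)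
  note manufacturer = smps_values_stageD(2)[OF S t a]
  show "integrable (pred a b) (\<lambda>d. case_prod (unstandardize (fM (Suc t))) (Phi a b (b * z t a v) d))"
    if "v \<in> Wset" for v
    using integrable_unstandardize_Phi \<open>1 < a\<close> \<open>0 < b\<close> z[OF that] by simp
  show "PiM c v (b * z t a v) + Epred a b (\<lambda>d. case_prod (unstandardize (fM (Suc t))) (Phi a b (b * z t a v) d))
    \<le> PiM c (w t a) (b * z t a (w t a))
      + Epred a b (\<lambda>d. case_prod (unstandardize (fM (Suc t))) (Phi a b (b * z t a (w t a)) d))"
    if "v \<in> Wset" for v
    unfolding mpe_objM_eq_scaled[OF \<open>1 < a\<close> \<open>0 < b\<close> z(1)[OF that]]
      mpe_objM_eq_scaled[OF \<open>1 < a\<close> \<open>0 < b\<close> z(1)[OF manufacturer[THEN conjunct1]]]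
      z(2)[OF that] z(2)[OF manufacturer[THEN conjunct1]]
    using that manufacturer \<open>1 < a\<close> \<open>0 < b\<close> by (intro mult_left_mono) auto
  show "unstandardize (fM t) a b = PiM c (w t a) (b * z t a (w t a))
      + Epred a b (\<lambda>d. case_prod (unstandardize (fM (Suc t))) (Phi a b (b * z t a (w t a)) d))"
    using manufacturer z[OF manufacturer[THEN conjunct1]] \<open>1 < a\<close> \<open>0 < b\<close>
    by (simp add: mpe_objM_eq_scaled unstandardize_def)
  show "unstandardize (fR t) a b = b * fRh t a (w t a) / (a - 1)"
    using smps_values_stageD(3)[OF S t a] by (simp add: unstandardize_def)
qed (use S in \<open>auto simp: smps_values_def unstandardize_def\<close>)

lemma mpe_values_stageD:
  assumes "mpe_values p c T a1 b1 w q VR VM VRh" "t \<in> {1..T}" "a \<in> Aset a1" "b \<in> Bset b1"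
  shows "\<forall>v\<in>Wset. (\<forall>q'\<in>Qset. integrable (pred a b) (\<lambda>d. case_prod (VR (Suc t)) (Phi a b q' d)))
      \<and> (\<forall>q'\<in>Qset. PiR p v q' a b + Epred a b (\<lambda>d. case_prod (VR (Suc t)) (Phi a b q' d))
            \<le> PiR p v (q t a b v) a b + Epred a b (\<lambda>d. case_prod (VR (Suc t)) (Phi a b (q t a b v) d)))
      \<and> VRh t a b v = PiR p v (q t a b v) a b + Epred a b (\<lambda>d. case_prod (VR (Suc t)) (Phi a b (q t a b v) d))"
    and "(\<forall>v\<in>Wset. integrable (pred a b) (\<lambda>d. case_prod (VM (Suc t)) (Phi a b (q t a b v) d)))
      \<and> (\<forall>v\<in>Wset. PiM c v (q t a b v) + Epred a b (\<lambda>d. case_prod (VM (Suc t)) (Phi a b (q t a b v) d))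
            \<le> PiM c (w t a b) (q t a b (w t a b))
              + Epred a b (\<lambda>d. case_prod (VM (Suc t)) (Phi a b (q t a b (w t a b)) d)))
      \<and> VM t a b = PiM c (w t a b) (q t a b (w t a b))
              + Epred a b (\<lambda>d. case_prod (VM (Suc t)) (Phi a b (q t a b (w t a b)) d))"
    and "VR t a b = VRh t a b (w t a b)"
  using assms unfolding mpe_values_def by blast+

lemma mpe_objR_standardize:
  assumes "1 < a1" "0 < b1" and M: "mpe_values p c T a1 b1 w q VR VM VRh"
    and t: "t \<in> {1..T}" and a: "a \<in> Aset a1" and b: "b \<in> Bset b1" and v: "v \<in> Wset"
    and later: "\<forall>a\<in>Aset a1. \<forall>b\<in>Bset b1. VR (Suc t) a b = unstandardize g a b" and q: "q0 \<in> Qset"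
  shows "PiR p v q0 a b + Epred a b (\<lambda>d. case_prod (VR (Suc t)) (Phi a b q0 d))
    = b / (a - 1) * std_objR p g a v (q0 / b)"
proof -
  have "integrable (pred a b) (\<lambda>d. case_prod (VR (Suc t)) (Phi a b q0 d))"
    using mpe_values_stageD(1)[OF M t a b] v q by blast
  then show ?thesis
    using Aset_gt_1[OF assms(1) a] Bset_pos[OF assms(2) b] q
    by (simp add: Epred_Phi_cong[OF assms(1,2) a b _ _ later] mpe_objR_eq_scaled Qset_def)
qed

lemma mpe_objM_standardize:
  assumes "1 < a1" "0 < b1" and M: "mpe_values p c T a1 b1 w q VR VM VRh"
    and t: "t \<in> {1..T}" and a: "a \<in> Aset a1" and b: "b \<in> Bset b1" and v: "v \<in> Wset"
    and later: "\<forall>a\<in>Aset a1. \<forall>b\<in>Bset b1. VM (Suc t) a b = unstandardize g a b"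
    and q: "q t a b v \<in> Qset"
  shows "PiM c v (q t a b v) + Epred a b (\<lambda>d. case_prod (VM (Suc t)) (Phi a b (q t a b v) d))
    = b / (a - 1) * std_objM c g a v (q t a b v / b)"
proof -
  have "integrable (pred a b) (\<lambda>d. case_prod (VM (Suc t)) (Phi a b (q t a b v) d))"
    using mpe_values_stageD(2)[OF M t a b] v by blast
  then show ?thesis
    using Aset_gt_1[OF assms(1) a] Bset_pos[OF assms(2) b] q
    by (simp add: Epred_Phi_cong[OF assms(1,2) a b _ _ later] mpe_objM_eq_scaled Qset_def)
qed

lemma mpe_orders_eq_zstar:
  assumes "0 < c" "c < p" "1 < a1" "0 < b1"
    and M: "mpe_values p c T a1 b1 w q VR VM VRh" and BM: "borel_markov a1 b1 T w q"
    and t: "t \<in> {1..T}" and a: "a \<in> Aset a1" and b: "b \<in> Bset b1" and v: "v \<in> Wset"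
    and later: "\<forall>a\<in>Aset a1. \<forall>b\<in>Bset b1. VR (Suc t) a b = unstandardize (fRstar p c T (Suc t)) a b"
  shows "q t a b v = b * zstar p c T t a v"
proof -
  have "1 < a" "0 < b" using Aset_gt_1 Bset_pos assms(3,4) a b by auto
  have q: "q t a b v \<in> Qset" using BM t a b v unfolding borel_markov_def by blast
  note objR = mpe_objR_standardize[OF assms(3,4) M t a b v later]
  have "\<forall>y\<in>Qset. std_objR p (fRstar p c T (Suc t)) a v y
      \<le> std_objR p (fRstar p c T (Suc t)) a v (q t a b v / b)"
  proof
    fix y assume "y \<in> Qset"
    then have "b * y \<in> Qset" using \<open>0 < b\<close> by (simp add: Qset_def)
    then have "PiR p v (b * y) a b + Epred a b (\<lambda>d. case_prod (VR (Suc t)) (Phi a b (b * y) d))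
        \<le> PiR p v (q t a b v) a b + Epred a b (\<lambda>d. case_prod (VR (Suc t)) (Phi a b (q t a b v) d))"
      using mpe_values_stageD(1)[OF M t a b] v by blast
    then show "std_objR p (fRstar p c T (Suc t)) a v y \<le> std_objR p (fRstar p c T (Suc t)) a v (q t a b v / b)"
      unfolding objR[OF \<open>b * y \<in> Qset\<close>] objR[OF q]
      using \<open>1 < a\<close> \<open>0 < b\<close> by (simp add: divide_le_cancel mult_le_cancel_left_pos)
  qed
  then have "q t a b v / b = zstar p c T t a v"
    using retailer_strict_opt[OF assms(1,2) \<open>1 < a\<close>] v q \<open>0 < b\<close>
    by (intro maximizer_unique[where S = Qset]) (auto simp: Wset_def Qset_def zstar_def best_order_nonneg)
  then show ?thesis using \<open>0 < b\<close> by (simp add: field_simps)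
qed

lemma mpe_stage_unique:
  assumes "0 < c" "c < p" "1 < a1" "0 < b1"
    and M: "mpe_values p c T a1 b1 w q VR VM VRh" and BM: "borel_markov a1 b1 T w q"
    and t: "t \<in> {1..T}" and a: "a \<in> Aset a1" and b: "b \<in> Bset b1"
    and laterR: "\<forall>a\<in>Aset a1. \<forall>b\<in>Bset b1. VR (Suc t) a b = unstandardize (fRstar p c T (Suc t)) a b"
    and laterM: "\<forall>a\<in>Aset a1. \<forall>b\<in>Bset b1. VM (Suc t) a b = unstandardize (fMstar p c T (Suc t)) a b"
  shows "(\<forall>v\<in>Wset. q t a b v = b * zstar p c T t a v) \<and> w t a b = wstar p c T t a
    \<and> VR t a b = unstandardize (fRstar p c T t) a b \<and> VM t a b = unstandardize (fMstar p c T t) a b"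
proof -
  have "1 < a" "0 < b" "t \<le> T" using Aset_gt_1 Bset_pos assms(3,4) a b t by auto
  have w: "w t a b \<in> Wset" using BM t a b unfolding borel_markov_def by blast
  note q_eq = mpe_orders_eq_zstar[OF assms(1-4) M BM t a b _ laterR]
  have q: "q t a b v \<in> Qset" "q t a b v / b = zstar p c T t a v" if "v \<in> Wset" for v
    using q_eq[OF that] \<open>0 < b\<close> by (auto simp: Qset_def zstar_def best_order_nonneg)
  note objR = mpe_objR_standardize[OF assms(3,4) M t a b w laterR q(1)[OF w]]
  have objM: "PiM c v (q t a b v) + Epred a b (\<lambda>d. case_prod (VM (Suc t)) (Phi a b (q t a b v) d))
      = b / (a - 1) * std_objM c (fMstar p c T (Suc t)) a v (zstar p c T t a v)" if "v \<in> Wset" for v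
    using mpe_objM_standardize[OF assms(3,4) M t a b that laterM q(1)[OF that]] q(2)[OF that] by simp
  note manufacturer = mpe_values_stageD(2)[OF M t a b]
  have "std_objM c (fMstar p c T (Suc t)) a v (zstar p c T t a v)
      \<le> std_objM c (fMstar p c T (Suc t)) a (w t a b) (zstar p c T t a (w t a b))" if v: "v \<in> Wset" for v
    using manufacturer[THEN conjunct2, THEN conjunct1, rule_format, OF v] \<open>1 < a\<close> \<open>0 < b\<close>
    unfolding objM[OF v] objM[OF w] by (simp add: divide_le_cancel mult_le_cancel_left_pos)
  then have w_eq: "w t a b = wstar p c T t a"
    using manufacturer_strict_opt[OF assms(1,2) \<open>1 < a\<close>] wstar_pos[OF assms(1,2) \<open>1 < a\<close>] w
    by (intro maximizer_unique[where S = Wset and F = "\<lambda>v. std_objM c (fMstar p c T (Suc t)) a v (zstar p c T t a v)"])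
       (auto simp: Wset_def)
  show ?thesis
    using q_eq w_eq objM[OF w] objR manufacturer q(2)[OF w] mpe_values_stageD(1,3)[OF M t a b] w \<open>0 < b\<close>
      std_objR_star[OF \<open>1 < a\<close> \<open>t \<le> T\<close>] std_objM_star[OF \<open>1 < a\<close> \<open>t \<le> T\<close>]
    by (auto simp: unstandardize_def)
qed

lemma mpe_unique:
  assumes "0 < c" "c < p" "1 < a1" "0 < b1" and MPE: "is_mpe p c T a1 b1 w q"
    and t: "t \<in> {1..T}" and a: "a \<in> Aset a1" and b: "b \<in> Bset b1"
  shows "w t a b = wstar p c T t a \<and> (\<forall>v\<in>Wset. q t a b v = b * zstar p c T t a v)"
proof -
  obtain VR VM VRh where M: "mpe_values p c T a1 b1 w q VR VM VRh"
    and BM: "borel_markov a1 b1 T w q"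
    using MPE by (auto simp: is_mpe_def)
  have "\<forall>a\<in>Aset a1. \<forall>b\<in>Bset b1. VR (Suc t) a b = unstandardize (fRstar p c T (Suc t)) a b
                                \<and> VM (Suc t) a b = unstandardize (fMstar p c T (Suc t)) a b"
  proof (rule inc_induct[of "Suc t" "Suc T"])
    show "\<forall>a\<in>Aset a1. \<forall>b\<in>Bset b1. VR (Suc T) a b = unstandardize (fRstar p c T (Suc T)) a b
                                 \<and> VM (Suc T) a b = unstandardize (fMstar p c T (Suc T)) a b"
      using M by (simp add: mpe_values_def unstandardize_def fRstar_final fMstar_final)
  next
    fix n assume "Suc t \<le> n" "n < Suc T"
      and "\<forall>a\<in>Aset a1. \<forall>b\<in>Bset b1. VR (Suc n) a b = unstandardize (fRstar p c T (Suc n)) a b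
                                  \<and> VM (Suc n) a b = unstandardize (fMstar p c T (Suc n)) a b"
    then show "\<forall>a\<in>Aset a1. \<forall>b\<in>Bset b1. VR n a b = unstandardize (fRstar p c T n) a b
                                 \<and> VM n a b = unstandardize (fMstar p c T n) a b"
      using mpe_stage_unique[OF assms(1-4) M BM, of n] by auto
  qed (use t in auto)
  then show ?thesis using mpe_stage_unique[OF assms(1-4) M BM t a b] by auto
qed

lemma measurable_by_Aset_slices:
  fixes f :: "real \<times> 'b::second_countable_topology \<Rightarrow> real"
  assumes "\<And>n. \<exists>h\<in>borel_measurable borel. \<forall>x\<in>Aset a1 \<times> S. fst x = a1 + real n \<longrightarrow> f x = h x"
  shows "f \<in> borel_measurable (restrict_space borel (Aset a1 \<times> S))"
proof (rule measurable_piecewise_restrict2[where A = "\<lambda>n. {x\<in>Aset a1 \<times> S. fst x = a1 + real n}"])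
  fix n
  have "closed {x :: real \<times> 'b. fst x = a1 + real n}"
    by (intro closed_Collect_eq continuous_intros)
  then have "{x :: real \<times> 'b. fst x = a1 + real n} \<in> sets borel" by (rule borel_closed)
  then show "{x\<in>Aset a1 \<times> S. fst x = a1 + real n} \<in> sets (restrict_space borel (Aset a1 \<times> S))"
    by (auto simp: sets_restrict_space Int_def)
  obtain h where "h \<in> borel_measurable borel" "\<forall>x\<in>Aset a1 \<times> S. fst x = a1 + real n \<longrightarrow> f x = h x"
    using assms by blast
  then show "\<exists>h\<in>borel_measurable (restrict_space borel (Aset a1 \<times> S)).
      \<forall>x\<in>{x\<in>Aset a1 \<times> S. fst x = a1 + real n}. f x = h x"
    by (intro bexI[of _ h] measurable_restrict_space1) auto
qed (auto simp: space_restrict_space Aset_def)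

lemma borel_markov_star:
  assumes "0 < c" "c < p" "1 < a1" "0 < b1"
  shows "borel_markov a1 b1 T (\<lambda>t a b. wstar p c T t a) (\<lambda>t a b v. b * zstar p c T t a v)"
  unfolding borel_markov_def
proof (intro ballI conjI)
  fix t a b assume "a \<in> Aset a1" "b \<in> Bset b1"
  then have "1 < a" "0 < b" using Aset_gt_1[OF assms(3)] Bset_pos[OF assms(4)] by auto
  then show "wstar p c T t a \<in> Wset" "\<And>v. v \<in> Wset \<Longrightarrow> b * zstar p c T t a v \<in> Qset"
    using wstar_pos[OF assms(1,2)] best_order_nonneg
    by (auto simp: Wset_def Qset_def zstar_def)
next
  fix t
  show "(\<lambda>x. wstar p c T t (fst x)) \<in> borel_measurable (restrict_space borel (Aset a1 \<times> Bset b1))"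
    by (rule measurable_by_Aset_slices) (auto intro!: bexI[of _ "\<lambda>x. wstar p c T t (a1 + real n)" for n])
  show "(\<lambda>x. fst (snd x) * zstar p c T t (fst x) (snd (snd x)))
      \<in> borel_measurable (restrict_space borel (Aset a1 \<times> Bset b1 \<times> Wset))"
  proof (rule measurable_by_Aset_slices)
    fix n
    let ?a = "a1 + real n"
    have [measurable]: "(\<lambda>x :: real \<times> real \<times> real. fst (snd x)) \<in> borel_measurable borel"
      "(\<lambda>x :: real \<times> real \<times> real. snd (snd x)) \<in> borel_measurable borel"
      by (intro borel_measurable_continuous_onI continuous_intros)+
    have "(\<lambda>x :: real \<times> real \<times> real. fst (snd x) * max ((Kstar p c T t ?a / snd (snd x)) powr (1 / ?a) - 1) 0)
        \<in> borel_measurable borel"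
      by measurable
    then show "\<exists>h\<in>borel_measurable borel. \<forall>x\<in>Aset a1 \<times> Bset b1 \<times> Wset.
        fst x = ?a \<longrightarrow> fst (snd x) * zstar p c T t (fst x) (snd (snd x)) = h x"
      by (rule bexI[rotated]) (auto simp: zstar_def best_order_def)
  qed
qed

theorem theorem2:
  fixes p c a1 b1 :: real and T :: nat
  assumes "0 < c" and "c < p" and "1 \<le> T" and "0 < b1" and "1 < a1"
  shows "\<exists>w z fR fM fRh.
    \<comment> \<open>(a) existence of an SMPS with value functions fR fM fRh\<close>
    smps_values p c T a1 w z fR fM fRh \<and>
    \<comment> \<open>(a) uniqueness of the SMPS\<close>
    (\<forall>w' z'. is_smps p c T a1 w' z' \<longrightarrow>
        (\<forall>t\<in>{1..T}. \<forall>a\<in>Aset a1. w' t a = w t a \<and> (\<forall>v\<in>Wset. z' t a v = z t a v))) \<and>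
    \<comment> \<open>(a) closed-form characterization\<close>
    (\<forall>t\<in>{1..T}. \<forall>a\<in>Aset a1.
        w t a = (p + fR (Suc t) (a + 1) - fR (Suc t) a)
                * (1 - 1 / a + c / (a * w t a)
                   - (fM (Suc t) (a + 1) - fM (Suc t) a)
                     / (a * (p + fR (Suc t) (a + 1) - fR (Suc t) a))) powr a \<and>
        (\<forall>v\<in>Wset. z t a v = max (((p + fR (Suc t) (a + 1) - fR (Suc t) a) / v) powr (1 / a) - 1) 0) \<and>
        z t a (w t a) = ((p + fR (Suc t) (a + 1) - fR (Suc t) a) / w t a) powr (1 / a) - 1 \<and>
        fR t a = (\<Sum>i=0..T-t. p - w (t+i) (a + real i)
                     * (1 + (a + real i) * z (t+i) (a + real i) (w (t+i) (a + real i)))) \<and>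
        fM t a = (\<Sum>i=0..T-t. w (t+i) (a + real i)
                     - c * (1 + (a + real i) * z (t+i) (a + real i) (w (t+i) (a + real i))))) \<and>
    (\<forall>a\<in>Aset a1. fR (Suc T) a = 0 \<and> fM (Suc T) a = 0) \<and>
    \<comment> \<open>(b) the MPE, and its uniqueness\<close>
    is_mpe p c T a1 b1 (\<lambda>t a b. w t a) (\<lambda>t a b v. b * z t a v) \<and>
    (\<forall>w' q'. is_mpe p c T a1 b1 w' q' \<longrightarrow>
        (\<forall>t\<in>{1..T}. \<forall>a\<in>Aset a1. \<forall>b\<in>Bset b1.
            w' t a b = w t a \<and> (\<forall>v\<in>Wset. q' t a b v = b * z t a v)))"
proof -
  note pos = \<open>0 < c\<close> \<open>c < p\<close>
  have smps: "smps_values p c T a1 (wstar p c T) (zstar p c T) (fRstar p c T) (fMstar p c T) (fRhstar p c T)"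
    using smps_values_star pos \<open>1 < a1\<close> by blast
  show ?thesis
    apply (rule exI[of _ "wstar p c T"], rule exI[of _ "zstar p c T"], rule exI[of _ "fRstar p c T"],
        rule exI[of _ "fMstar p c T"], rule exI[of _ "fRhstar p c T"], intro conjI)
    subgoal by (fact smps)
    subgoal using smps_unique pos \<open>1 < a1\<close> by (auto simp: is_smps_def)
    subgoal using Aset_gt_1[OF \<open>1 < a1\<close>] by (intro ballI star_closed_form[OF pos]) auto
    subgoal by (simp add: fRstar_final fMstar_final)
    subgoal
      using borel_markov_star[OF pos \<open>1 < a1\<close> \<open>0 < b1\<close>]
        mpe_values_of_smps_values[OF \<open>1 < a1\<close> \<open>0 < b1\<close> smps]
      by (auto simp: is_mpe_def)
    subgoal using mpe_unique pos \<open>1 < a1\<close> \<open>0 < b1\<close> by blast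
    done
qed

end
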